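(* The variety of X-states $\mathscr X$ on $n$ qubits has dimension $2^{2n-1}+2n-1$.
   Context: Let $V_1,\dots,V_n$ be two-dimensional complex vector spaces and $\mathscr L$ the affine space of trace-one endomorphisms of $V_1\otimes\cdots\otimes V_n$. An X-state is a $\rho\in\mathscr L$ for which there exist ordered bases $\{e^i_0,e^i_1\}$ of the $V_i$ such that $\rho$ maps the span of the basis tensors $e^1_{\phi(1)}\otimes\cdots\otimes e^n_{\phi(n)}$ ($\phi:\{1,\dots,n\}\to\{0,1\}$) with $\sum\phi(i)$ even into itself and the span of those with $\sum\phi(i)$ odd into itself. $\mathscr X\subseteq\mathscr L$ is the Zariski closure of the set of X-states with its reduced induced structure (an irreducible variety). *)

theory Defs
  imports Complex_Main "HOL-Library.Extended_Nat"
begin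

definition aspace :: "'v set \<Rightarrow> ('v \<Rightarrow> complex) set" where
  "aspace V = {x. \<forall>v. v \<notin> V \<longrightarrow> x v = 0}"

inductive polyfun :: "'v set \<Rightarrow> (('v \<Rightarrow> complex) \<Rightarrow> complex) \<Rightarrow> bool" for V where
  pconst: "polyfun V (\<lambda>x. c)"
| pvar: "v \<in> V \<Longrightarrow> polyfun V (\<lambda>x. x v)"
| padd: "polyfun V f \<Longrightarrow> polyfun V g \<Longrightarrow> polyfun V (\<lambda>x. f x + g x)"
| pmult: "polyfun V f \<Longrightarrow> polyfun V g \<Longrightarrow> polyfun V (\<lambda>x. f x * g x)"

definition zariski_closed :: "'v set \<Rightarrow> ('v \<Rightarrow> complex) set \<Rightarrow> bool" where
  "zariski_closed V S \<longleftrightarrow>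
     (\<exists>F. (\<forall>f\<in>F. polyfun V f) \<and> S = {x \<in> aspace V. \<forall>f\<in>F. f x = 0})"

definition zariski_closure :: "'v set \<Rightarrow> ('v \<Rightarrow> complex) set \<Rightarrow> ('v \<Rightarrow> complex) set" where
  "zariski_closure V A = \<Inter>{S. zariski_closed V S \<and> A \<subseteq> S}"

definition zariski_irreducible :: "'v set \<Rightarrow> ('v \<Rightarrow> complex) set \<Rightarrow> bool" where
  "zariski_irreducible V Z \<longleftrightarrow> zariski_closed V Z \<and> Z \<noteq> {} \<and>
     (\<forall>S1 S2. zariski_closed V S1 \<and> zariski_closed V S2 \<and> Z = S1 \<union> S2 \<longrightarrow> Z = S1 \<or> Z = S2)"

definition zariski_dim :: "'v set \<Rightarrow> ('v \<Rightarrow> complex) set \<Rightarrow> enat" where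
  "zariski_dim V X = Sup {enat d | d. \<exists>Z :: nat \<Rightarrow> ('v \<Rightarrow> complex) set.
      (\<forall>i\<le>d. zariski_irreducible V (Z i) \<and> Z i \<subseteq> X) \<and> (\<forall>i<d. Z i \<subset> Z (Suc i))}"

text \<open>Basis index set of (C^2)^{\<otimes>n}: bit strings phi, phi i for i < n, False beyond n.
  Endomorphisms are 2^n x 2^n matrices, points of the affine space with coordinates
  bits n \<times> bits n.\<close>

definition bits :: "nat \<Rightarrow> (nat \<Rightarrow> bool) set" where
  "bits n = {\<phi>. \<forall>i\<ge>n. \<not> \<phi> i}"

definition parity :: "nat \<Rightarrow> (nat \<Rightarrow> bool) \<Rightarrow> bool" where
  "parity n \<phi> = even (card {i. i < n \<and> \<phi> i})"

text \<open>b i a c = c-th standard coordinate of the basis vector e^i_a of V_i = C^2.\<close>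

definition is_basis_family :: "nat \<Rightarrow> (nat \<Rightarrow> bool \<Rightarrow> bool \<Rightarrow> complex) \<Rightarrow> bool" where
  "is_basis_family n b \<longleftrightarrow>
     (\<forall>i<n. b i False False * b i True True - b i False True * b i True False \<noteq> 0)"

text \<open>The tensor basis vector e^1_{phi 1} \<otimes> ... \<otimes> e^n_{phi n}.\<close>

definition tensor_vec :: "nat \<Rightarrow> (nat \<Rightarrow> bool \<Rightarrow> bool \<Rightarrow> complex) \<Rightarrow> (nat \<Rightarrow> bool)
    \<Rightarrow> (nat \<Rightarrow> bool) \<Rightarrow> complex" where
  "tensor_vec n b \<phi> = (\<lambda>\<chi>. if \<chi> \<in> bits n then (\<Prod>i<n. b i (\<phi> i) (\<chi> i)) else 0)"

definition mat_apply :: "nat \<Rightarrow> ((nat \<Rightarrow> bool) \<times> (nat \<Rightarrow> bool) \<Rightarrow> complex)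
    \<Rightarrow> ((nat \<Rightarrow> bool) \<Rightarrow> complex) \<Rightarrow> (nat \<Rightarrow> bool) \<Rightarrow> complex" where
  "mat_apply n \<rho> v = (\<lambda>\<chi>. if \<chi> \<in> bits n then (\<Sum>\<psi>\<in>bits n. \<rho> (\<chi>, \<psi>) * v \<psi>) else 0)"

definition parity_span :: "nat \<Rightarrow> (nat \<Rightarrow> bool \<Rightarrow> bool \<Rightarrow> complex) \<Rightarrow> bool
    \<Rightarrow> ((nat \<Rightarrow> bool) \<Rightarrow> complex) set" where
  "parity_span n b p = {v. \<exists>c. v = (\<lambda>\<chi>. \<Sum>\<psi>\<in>{\<psi>\<in>bits n. parity n \<psi> = p}. c \<psi> * tensor_vec n b \<psi> \<chi>)}"

definition trace_one_space :: "nat \<Rightarrow> ((nat \<Rightarrow> bool) \<times> (nat \<Rightarrow> bool) \<Rightarrow> complex) set" where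
  "trace_one_space n = {\<rho> \<in> aspace (bits n \<times> bits n). (\<Sum>\<phi>\<in>bits n. \<rho> (\<phi>, \<phi>)) = 1}"

definition x_states :: "nat \<Rightarrow> ((nat \<Rightarrow> bool) \<times> (nat \<Rightarrow> bool) \<Rightarrow> complex) set" where
  "x_states n = {\<rho> \<in> trace_one_space n. \<exists>b. is_basis_family n b \<and>
      (\<forall>p. \<forall>v\<in>parity_span n b p. mat_apply n \<rho> v \<in> parity_span n b p)}"

definition x_variety :: "nat \<Rightarrow> ((nat \<Rightarrow> bool) \<times> (nat \<Rightarrow> bool) \<Rightarrow> complex) set" where
  "x_variety n = zariski_closure (bits n \<times> bits n) (x_states n)"

end

theory Submission
  imports Defs "HOL-Computational_Algebra.Polynomial" "HOL-Library.FuncSet"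
begin

text \<open>Every X-state is W M W^-1 with M block diagonal for the splitting into even and odd basis
  tensors and W a Kronecker product of invertible 2x2 matrices. After reordering the basis vectors
  at some qubits, W may be taken to be the Kronecker product of the matrices [[1, s_i], [t_i,
  1 + s_i t_i]], and M has trace one, so it has 2^(2n-1) - 1 free entries. This exhibits the
  X-states as a polynomial image of an affine space of dimension D = 2^(2n-1) + 2n - 1 that is
  contained in them. A chain of d irreducible closed sets yields d algebraically independent
  polynomial functions, but pulled back to the parameter space any D + 1 polynomials satisfy a
  relation, by counting monomials; so the dimension is at most D. Conversely, the closures of the
  images of the coordinate subspaces spanned by the first j parameters form a strictly increasing
  chain of D + 1 irreducible closed sets.\<close>

section \<open>Polynomial functions and the Zariski topology\<close>

lemma polyfun_sum:
  "(\<And>i. i \<in> I \<Longrightarrow> polyfun V (f i)) \<Longrightarrow> polyfun V (\<lambda>x. \<Sum>i\<in>I. f i x)"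
  by (induction I rule: infinite_finite_induct) (auto intro: polyfun.intros)

lemma polyfun_prod:
  "(\<And>i. i \<in> I \<Longrightarrow> polyfun V (f i)) \<Longrightarrow> polyfun V (\<lambda>x. \<Prod>i\<in>I. f i x)"
  by (induction I rule: infinite_finite_induct) (auto intro: polyfun.intros)

lemma polyfun_power: "polyfun V f \<Longrightarrow> polyfun V (\<lambda>x. f x ^ k)"
  by (induction k) (auto intro: polyfun.intros)

lemma polyfun_diff: "polyfun V f \<Longrightarrow> polyfun V g \<Longrightarrow> polyfun V (\<lambda>x. f x - g x)"
  using polyfun.padd[OF _ polyfun.pmult[OF polyfun.pconst[of V "-1"]], of f g] by simp

lemma polyfun_uminus: "polyfun V f \<Longrightarrow> polyfun V (\<lambda>x. - f x)"
  using polyfun.pmult[OF polyfun.pconst[of V "-1"], of f] by simp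

lemma polyfun_compose:
  assumes "polyfun V f" and "\<And>v. v \<in> V \<Longrightarrow> polyfun W (\<lambda>y. \<phi> y v)"
  shows "polyfun W (\<lambda>y. f (\<phi> y))"
  using assms by (induction rule: polyfun.induct) (auto intro: polyfun.intros)

lemma polyfun_along_line:
  assumes "polyfun V f"
  shows "\<exists>p. \<forall>t. f (\<lambda>v. a v + t * (b v - a v)) = poly p t"
  using assms
proof (induction rule: polyfun.induct)
  case (pconst c)
  show ?case by (rule exI[of _ "[:c:]"]) simp
next
  case (pvar v)
  show ?case by (rule exI[of _ "[:a v, b v - a v:]"]) (simp add: mult.commute)
next
  case (padd f g)
  then obtain p q where "\<forall>t. f (\<lambda>v. a v + t * (b v - a v)) = poly p t"
    and "\<forall>t. g (\<lambda>v. a v + t * (b v - a v)) = poly q t" by blast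
  then show ?case by (intro exI[of _ "p + q"]) simp
next
  case (pmult f g)
  then obtain p q where "\<forall>t. f (\<lambda>v. a v + t * (b v - a v)) = poly p t"
    and "\<forall>t. g (\<lambda>v. a v + t * (b v - a v)) = poly q t" by blast
  then show ?case by (intro exI[of _ "p * q"]) simp
qed

lemma aspace_line: "a \<in> aspace W \<Longrightarrow> b \<in> aspace W \<Longrightarrow> (\<lambda>v. a v + t * (b v - a v)) \<in> aspace W"
  unfolding aspace_def by auto

text \<open>Restrict both factors to the line through a point where p does not vanish and a point
  where q does not.\<close>

lemma aspace_no_zero_divisors:
  assumes "polyfun U p" "polyfun U q" and pq: "\<And>x. x \<in> aspace W \<Longrightarrow> p x * q x = 0"
  shows "(\<forall>x\<in>aspace W. p x = 0) \<or> (\<forall>x\<in>aspace W. q x = 0)"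
proof (rule ccontr)
  assume "\<not> ?thesis"
  then obtain a b where ab: "a \<in> aspace W" "b \<in> aspace W" "p a \<noteq> 0" "q b \<noteq> 0" by auto
  obtain P where P: "\<forall>t. p (\<lambda>v. a v + t * (b v - a v)) = poly P t"
    using polyfun_along_line[OF assms(1)] by blast
  obtain Q where Q: "\<forall>t. q (\<lambda>v. a v + t * (b v - a v)) = poly Q t"
    using polyfun_along_line[OF assms(2)] by blast
  have "poly P 0 \<noteq> 0" using P[rule_format, of 0] ab(3) by simp
  moreover have "poly Q 1 \<noteq> 0" using Q[rule_format, of 1] ab(4) by simp
  ultimately have "P * Q \<noteq> 0" by auto
  then obtain t where "poly (P * Q) t \<noteq> 0" using poly_all_0_iff_0 by blast
  moreover have "poly (P * Q) t = 0" using pq[OF aspace_line[OF ab(1,2)]] P Q by simp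
  ultimately show False by contradiction
qed

lemma zariski_closed_aspace: "zariski_closed V (aspace V)"
  unfolding zariski_closed_def by (intro exI[of _ "{}"]) auto

lemma zariski_closed_subset_aspace: "zariski_closed V S \<Longrightarrow> S \<subseteq> aspace V"
  unfolding zariski_closed_def by auto

lemma zariski_closed_zero_set: "polyfun V f \<Longrightarrow> zariski_closed V {x \<in> aspace V. f x = 0}"
  unfolding zariski_closed_def by (intro exI[of _ "{f}"]) auto

lemma zariski_closed_Inter:
  assumes closed: "\<And>S. S \<in> \<S> \<Longrightarrow> zariski_closed V S" and "\<S> \<noteq> {}"
  shows "zariski_closed V (\<Inter>\<S>)"
proof -
  have "\<forall>S\<in>\<S>. \<exists>F. (\<forall>f\<in>F. polyfun V f) \<and> S = {x \<in> aspace V. \<forall>f\<in>F. f x = 0}"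
    using closed unfolding zariski_closed_def by blast
  from bchoice[OF this] obtain F
    where "\<forall>S\<in>\<S>. (\<forall>f\<in>F S. polyfun V f) \<and> S = {x \<in> aspace V. \<forall>f\<in>F S. f x = 0}"
    by blast
  note F = this[rule_format]
  have "\<Inter>\<S> = {x \<in> aspace V. \<forall>f\<in>(\<Union>S\<in>\<S>. F S). f x = 0}"
  proof (intro equalityI subsetI)
    fix x assume x: "x \<in> \<Inter>\<S>"
    obtain S0 where "S0 \<in> \<S>" using \<open>\<S> \<noteq> {}\<close> by auto
    with x F[of S0] have "x \<in> aspace V" by auto
    moreover have "f x = 0" if "S \<in> \<S>" "f \<in> F S" for S f
      using x that F[of S] by auto
    ultimately show "x \<in> {x \<in> aspace V. \<forall>f\<in>(\<Union>S\<in>\<S>. F S). f x = 0}" by blast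
  next
    fix x assume "x \<in> {x \<in> aspace V. \<forall>f\<in>(\<Union>S\<in>\<S>. F S). f x = 0}"
    then show "x \<in> \<Inter>\<S>" using F by blast
  qed
  then show ?thesis
    unfolding zariski_closed_def using F by (intro exI[of _ "\<Union>S\<in>\<S>. F S"]) blast
qed

lemma zariski_closed_Int:
  assumes "zariski_closed V S" "zariski_closed V T"
  shows "zariski_closed V (S \<inter> T)"
  using zariski_closed_Inter[of "{S, T}" V] assms by auto

lemma zariski_closed_closure: "A \<subseteq> aspace V \<Longrightarrow> zariski_closed V (zariski_closure V A)"
  unfolding zariski_closure_def by (rule zariski_closed_Inter) (use zariski_closed_aspace in auto)

lemma zariski_closure_superset: "A \<subseteq> aspace V \<Longrightarrow> A \<subseteq> zariski_closure V A"
  unfolding zariski_closure_def by auto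

lemma zariski_closure_minimal: "zariski_closed V S \<Longrightarrow> A \<subseteq> S \<Longrightarrow> zariski_closure V A \<subseteq> S"
  unfolding zariski_closure_def by auto

lemma zariski_closure_mono: "A \<subseteq> B \<Longrightarrow> zariski_closure V A \<subseteq> zariski_closure V B"
  unfolding zariski_closure_def by auto

lemma polyfun_vanishes_on_closure:
  assumes "polyfun V f" "A \<subseteq> aspace V" "\<And>x. x \<in> A \<Longrightarrow> f x = 0" "x \<in> zariski_closure V A"
  shows "f x = 0"
proof -
  have "zariski_closure V A \<subseteq> {x \<in> aspace V. f x = 0}"
    using assms(2,3) by (intro zariski_closure_minimal zariski_closed_zero_set[OF assms(1)]) auto
  then show ?thesis using assms(4) by auto
qed

lemma zariski_closed_separating_polyfun:
  assumes "zariski_closed V Z" "x \<in> aspace V" "x \<notin> Z"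
  obtains f where "polyfun V f" "\<And>z. z \<in> Z \<Longrightarrow> f z = 0" "f x \<noteq> 0"
  using assms unfolding zariski_closed_def by auto

lemma zariski_irreducible_no_zero_divisors:
  assumes irr: "zariski_irreducible V Z" and "polyfun V p" "polyfun V q"
    and pq: "\<And>x. x \<in> Z \<Longrightarrow> p x * q x = 0"
  shows "(\<forall>x\<in>Z. p x = 0) \<or> (\<forall>x\<in>Z. q x = 0)"
proof -
  define S1 where "S1 = Z \<inter> {x \<in> aspace V. p x = 0}"
  define S2 where "S2 = Z \<inter> {x \<in> aspace V. q x = 0}"
  have closed: "zariski_closed V Z" using irr unfolding zariski_irreducible_def by blast
  have "zariski_closed V S1" "zariski_closed V S2"
    unfolding S1_def S2_def using closed assms(2,3)
    by (simp_all add: zariski_closed_Int zariski_closed_zero_set)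
  moreover have "Z = S1 \<union> S2"
    using pq zariski_closed_subset_aspace[OF closed] unfolding S1_def S2_def by auto
  ultimately have "Z = S1 \<or> Z = S2"
    using irr unfolding zariski_irreducible_def by blast
  then show ?thesis unfolding S1_def S2_def by blast
qed

text \<open>The coordinate ring of the image embeds into that of the affine space, which is
  a domain.\<close>

lemma zariski_irreducible_closure_image:
  assumes img: "\<And>y. y \<in> aspace W \<Longrightarrow> \<phi> y \<in> aspace V"
    and poly: "\<And>v. v \<in> V \<Longrightarrow> polyfun U (\<lambda>y. \<phi> y v)"
  shows "zariski_irreducible V (zariski_closure V (\<phi> ` aspace W))"
proof -
  let ?A = "\<phi> ` aspace W"
  have A: "?A \<subseteq> aspace V" using img by auto
  have "\<phi> (\<lambda>_. 0) \<in> zariski_closure V ?A"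
    using zariski_closure_superset[OF A] by (auto simp: aspace_def)
  moreover have "zariski_closure V ?A = S1 \<or> zariski_closure V ?A = S2"
    if closed: "zariski_closed V S1" "zariski_closed V S2"
      and split: "zariski_closure V ?A = S1 \<union> S2" for S1 S2
  proof (rule ccontr)
    assume "\<not> ?thesis"
    then have "\<not> ?A \<subseteq> S1" "\<not> ?A \<subseteq> S2"
      using zariski_closure_minimal[OF closed(1)] zariski_closure_minimal[OF closed(2)] split
      by blast+
    then obtain y1 y2 where y: "y1 \<in> aspace W" "\<phi> y1 \<notin> S1" "y2 \<in> aspace W" "\<phi> y2 \<notin> S2"
      by blast
    obtain f1 where f1: "polyfun V f1" "\<And>z. z \<in> S1 \<Longrightarrow> f1 z = 0" "f1 (\<phi> y1) \<noteq> 0"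
      using zariski_closed_separating_polyfun[OF closed(1) img[OF y(1)] y(2)] by blast
    obtain f2 where f2: "polyfun V f2" "\<And>z. z \<in> S2 \<Longrightarrow> f2 z = 0" "f2 (\<phi> y2) \<noteq> 0"
      using zariski_closed_separating_polyfun[OF closed(2) img[OF y(3)] y(4)] by blast
    have "f1 (\<phi> y) * f2 (\<phi> y) = 0" if "y \<in> aspace W" for y
    proof -
      have "\<phi> y \<in> S1 \<union> S2" using that zariski_closure_superset[OF A] split by blast
      then show ?thesis using f1(2) f2(2) by auto
    qed
    moreover have "polyfun U (\<lambda>y. f1 (\<phi> y))" "polyfun U (\<lambda>y. f2 (\<phi> y))"
      using polyfun_compose[of V _ U \<phi>] f1(1) f2(1) poly by blast+
    ultimately have "(\<forall>y\<in>aspace W. f1 (\<phi> y) = 0) \<or> (\<forall>y\<in>aspace W. f2 (\<phi> y) = 0)"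
      using aspace_no_zero_divisors by blast
    then show False using y f1(3) f2(3) by blast
  qed
  ultimately show ?thesis
    unfolding zariski_irreducible_def using zariski_closed_closure[OF A] by blast
qed

section \<open>Algebraic independence and the dimension of polynomial images\<close>

definition bounded_exponents :: "'a set \<Rightarrow> nat \<Rightarrow> ('a \<Rightarrow> nat) set" where
  "bounded_exponents K e = {\<alpha>. (\<forall>j. j \<notin> K \<longrightarrow> \<alpha> j = 0) \<and> (\<forall>j. \<alpha> j \<le> e)}"

definition poly_eval :: "'a set \<Rightarrow> nat \<Rightarrow> (('a \<Rightarrow> nat) \<Rightarrow> complex) \<Rightarrow> ('a \<Rightarrow> complex) \<Rightarrow> complex" where
  "poly_eval K e c x = (\<Sum>\<alpha>\<in>bounded_exponents K e. c \<alpha> * (\<Prod>j\<in>K. x j ^ \<alpha> j))"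

lemma bounded_exponents_eq_image:
  "bounded_exponents K e = (\<lambda>g j. if j \<in> K then g j else 0) ` (Pi\<^sub>E K (\<lambda>_. {..e}))"
proof (intro equalityI subsetI)
  fix \<alpha> assume \<alpha>: "\<alpha> \<in> bounded_exponents K e"
  then have "restrict \<alpha> K \<in> Pi\<^sub>E K (\<lambda>_. {..e})" "\<alpha> = (\<lambda>j. if j \<in> K then restrict \<alpha> K j else 0)"
    by (auto simp: bounded_exponents_def)
  then show "\<alpha> \<in> (\<lambda>g j. if j \<in> K then g j else 0) ` (Pi\<^sub>E K (\<lambda>_. {..e}))" by blast
qed (auto simp: bounded_exponents_def PiE_def Pi_def)

lemma finite_bounded_exponents: "finite K \<Longrightarrow> finite (bounded_exponents K e)"
  unfolding bounded_exponents_eq_image by (intro finite_imageI finite_PiE) auto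

lemma card_bounded_exponents:
  assumes "finite K"
  shows "card (bounded_exponents K e) = Suc e ^ card K"
proof -
  have "inj_on (\<lambda>g j. if j \<in> K then g j else 0) (Pi\<^sub>E K (\<lambda>_. {..e}))"
  proof (rule inj_onI)
    fix g h assume "g \<in> Pi\<^sub>E K (\<lambda>_. {..e})" "h \<in> Pi\<^sub>E K (\<lambda>_. {..e})"
      and "(\<lambda>j. if j \<in> K then g j else 0) = (\<lambda>j. if j \<in> K then h j else 0)"
    then show "g = h" by (metis (mono_tags) PiE_ext)
  qed
  then have "card (bounded_exponents K e) = card (Pi\<^sub>E K (\<lambda>_. {..e}))"
    unfolding bounded_exponents_eq_image by (rule card_image)
  also have "\<dots> = Suc e ^ card K" using assms by (simp add: card_PiE)
  finally show ?thesis .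
qed

lemma bounded_exponents_mono: "e \<le> e' \<Longrightarrow> bounded_exponents K e \<subseteq> bounded_exponents K e'"
  by (auto simp: bounded_exponents_def intro: order_trans)

lemma bounded_exponents_empty: "bounded_exponents {} e = {\<lambda>_. 0}"
  by (auto simp: bounded_exponents_def)

lemma poly_eval_cong: "(\<And>j. j \<in> K \<Longrightarrow> x j = x' j) \<Longrightarrow> poly_eval K e c x = poly_eval K e c x'"
  unfolding poly_eval_def by (intro sum.cong prod.cong refl) auto

lemma polyfun_poly_eval:
  "(\<And>j. j \<in> K \<Longrightarrow> polyfun V (f j)) \<Longrightarrow> polyfun V (\<lambda>x. poly_eval K e c (\<lambda>j. f j x))"
  unfolding poly_eval_def by (intro polyfun_sum polyfun.pmult polyfun.pconst polyfun_prod polyfun_power)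

lemma poly_eval_lessThan_Suc:
  "poly_eval {..<Suc k} e c x = (\<Sum>r\<le>e. x k ^ r * poly_eval {..<k} e (\<lambda>\<beta>. c (\<beta>(k := r))) x)"
proof -
  have bij: "bij_betw (\<lambda>(\<beta>, r). \<beta>(k := r))
      (bounded_exponents {..<k} e \<times> {..e}) (bounded_exponents {..<Suc k} e)"
    by (rule bij_betwI[where g = "\<lambda>\<alpha>. (\<alpha>(k := 0), \<alpha> k)"]) (auto simp: bounded_exponents_def)
  have monomial: "(\<Prod>j<Suc k. x j ^ (\<beta>(k := r)) j) = x k ^ r * (\<Prod>j<k. x j ^ \<beta> j)" for \<beta> r
  proof -
    have "(\<Prod>j<k. x j ^ (\<beta>(k := r)) j) = (\<Prod>j<k. x j ^ \<beta> j)" by (intro prod.cong) auto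
    then show ?thesis by (simp add: prod.lessThan_Suc mult.commute)
  qed
  have "poly_eval {..<Suc k} e c x = (\<Sum>(\<beta>, r)\<in>bounded_exponents {..<k} e \<times> {..e}.
      c (\<beta>(k := r)) * (x k ^ r * (\<Prod>j<k. x j ^ \<beta> j)))"
    unfolding poly_eval_def
    by (subst sum.reindex_bij_betw[OF bij, symmetric]) (simp add: split_beta monomial mult.commute)
  also have "\<dots> = (\<Sum>r\<le>e. x k ^ r * poly_eval {..<k} e (\<lambda>\<beta>. c (\<beta>(k := r))) x)"
    unfolding poly_eval_def sum.cartesian_product[symmetric]
    by (subst sum.swap) (simp add: sum_distrib_left algebra_simps)
  finally show ?thesis .
qed

text \<open>A lower bound k for the transcendence degree of the function field of S.\<close>

definition alg_indep_on :: "'v set \<Rightarrow> ('v \<Rightarrow> complex) set \<Rightarrow> nat \<Rightarrow> bool" where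
  "alg_indep_on V S k \<longleftrightarrow> (\<exists>f. (\<forall>j<k. polyfun V (f j)) \<and>
     (\<forall>e c. (\<forall>x\<in>S. poly_eval {..<k} e c (\<lambda>j. f j x) = 0) \<longrightarrow>
        (\<forall>\<alpha>\<in>bounded_exponents {..<k} e. c \<alpha> = 0)))"

lemma alg_indep_on_mono: "S \<subseteq> T \<Longrightarrow> alg_indep_on V S k \<Longrightarrow> alg_indep_on V T k"
  unfolding alg_indep_on_def by blast

lemma alg_indep_on_0: "S \<noteq> {} \<Longrightarrow> alg_indep_on V S 0"
  unfolding alg_indep_on_def poly_eval_def by (auto simp: bounded_exponents_empty)

lemma lowest_coefficient_vanishes:
  assumes W: "zariski_irreducible V W" and "Z \<subseteq> W"
    and g: "polyfun V g" "\<And>z. z \<in> Z \<Longrightarrow> g z = 0" "w \<in> W" "g w \<noteq> 0"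
    and h: "\<And>r. polyfun V (h r)" and "r0 \<le> e"
    and rel: "\<And>x. x \<in> W \<Longrightarrow> (\<Sum>r\<in>{r0..e}. g x ^ r * h r x) = 0"
    and "z \<in> Z"
  shows "h r0 z = 0"
proof -
  define H where "H x = (\<Sum>r\<in>{r0..e}. g x ^ (r - r0) * h r x)" for x
  have "polyfun V H"
    unfolding H_def by (intro polyfun_sum polyfun.pmult polyfun_power g(1) h)
  moreover have "g x ^ r0 * H x = 0" if "x \<in> W" for x
  proof -
    have "g x ^ r0 * H x = (\<Sum>r\<in>{r0..e}. g x ^ r * h r x)"
      unfolding H_def sum_distrib_left by (intro sum.cong refl) (simp add: mult.assoc flip: power_add)
    then show ?thesis using rel[OF that] by simp
  qed
  ultimately have "(\<forall>x\<in>W. g x ^ r0 = 0) \<or> (\<forall>x\<in>W. H x = 0)"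
    by (rule zariski_irreducible_no_zero_divisors[OF W polyfun_power[OF g(1)]])
  with g(3,4) have "\<forall>x\<in>W. H x = 0" by auto
  then have "H z = 0" using \<open>Z \<subseteq> W\<close> \<open>z \<in> Z\<close> by blast
  moreover have "H z = (\<Sum>r\<in>{r0..e}. if r = r0 then h r z else 0)"
    unfolding H_def using g(2)[OF \<open>z \<in> Z\<close>] by (intro sum.cong refl) auto
  ultimately show ?thesis using \<open>r0 \<le> e\<close> by simp
qed

text \<open>In a relation on W, written as a polynomial in g, the lowest nonzero coefficient would give
  a relation on Z.\<close>

lemma alg_indep_extend:
  assumes W: "zariski_irreducible V W" "Z \<subseteq> W"
    and f: "\<forall>j<k. polyfun V (f j)"
    and indep_f: "\<And>e c. \<forall>x\<in>Z. poly_eval {..<k} e c (\<lambda>j. f j x) = 0 \<Longrightarrow>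
      \<forall>\<alpha>\<in>bounded_exponents {..<k} e. c \<alpha> = 0"
    and g: "polyfun V g" "\<And>z. z \<in> Z \<Longrightarrow> g z = 0" "w \<in> W" "g w \<noteq> 0"
    and rel: "\<forall>x\<in>W. poly_eval {..<Suc k} e c (\<lambda>j. (f(k := g)) j x) = 0"
    and \<alpha>: "\<alpha> \<in> bounded_exponents {..<Suc k} e"
  shows "c \<alpha> = 0"
proof -
  define h where "h r x = poly_eval {..<k} e (\<lambda>\<beta>. c (\<beta>(k := r))) (\<lambda>j. f j x)" for r x
  have rel_g: "(\<Sum>r\<le>e. g x ^ r * h r x) = 0" if "x \<in> W" for x
  proof -
    have "h r x = poly_eval {..<k} e (\<lambda>\<beta>. c (\<beta>(k := r))) (\<lambda>j. (f(k := g)) j x)" for r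
      unfolding h_def by (rule poly_eval_cong) simp
    then show ?thesis using rel that by (simp add: poly_eval_lessThan_Suc)
  qed
  have h_poly: "polyfun V (h r)" for r
    unfolding h_def by (rule polyfun_poly_eval) (use f in auto)
  have "c (\<beta>(k := r)) = 0" if "r \<le> e" "\<beta> \<in> bounded_exponents {..<k} e" for r \<beta>
    using that
  proof (induction r arbitrary: \<beta> rule: less_induct)
    case (less r)
    have "h r' x = 0" if "r' < r" for r' x
      unfolding h_def poly_eval_def using less.IH[of r'] that less.prems(1)
      by (simp add: fun_upd_def)
    then have "(\<Sum>r'\<in>{r..e}. g x ^ r' * h r' x) = 0" if "x \<in> W" for x
      using rel_g[OF that] by (subst (asm) sum.mono_neutral_right[of "{..e}" "{r..e}"]) auto
    then have "h r z = 0" if "z \<in> Z" for z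
      using W(2) that
      by (intro lowest_coefficient_vanishes[OF W(1) _ g h_poly less.prems(1)]) auto
    then show ?case
      using indep_f[of e "\<lambda>\<beta>. c (\<beta>(k := r))"] less.prems(2) unfolding h_def by blast
  qed
  moreover have "\<alpha>(k := 0) \<in> bounded_exponents {..<k} e" "\<alpha> k \<le> e"
    using \<alpha> by (auto simp: bounded_exponents_def)
  ultimately show "c \<alpha> = 0" by (metis fun_upd_triv fun_upd_upd)
qed

lemma alg_indep_on_Suc:
  assumes W: "zariski_irreducible V W" and Z: "zariski_closed V Z" "Z \<subset> W"
    and indep: "alg_indep_on V Z k"
  shows "alg_indep_on V W (Suc k)"
proof -
  obtain f where f: "\<forall>j<k. polyfun V (f j)"
    and indep_f: "\<And>e c. \<forall>x\<in>Z. poly_eval {..<k} e c (\<lambda>j. f j x) = 0 \<Longrightarrow>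
      \<forall>\<alpha>\<in>bounded_exponents {..<k} e. c \<alpha> = 0"
    using indep unfolding alg_indep_on_def by blast
  obtain w where w: "w \<in> W" "w \<notin> Z" using Z(2) by blast
  moreover have "W \<subseteq> aspace V"
    using W by (simp add: zariski_irreducible_def zariski_closed_subset_aspace)
  ultimately have "w \<in> aspace V" by blast
  then obtain g where g: "polyfun V g" "\<And>z. z \<in> Z \<Longrightarrow> g z = 0" "g w \<noteq> 0"
    using zariski_closed_separating_polyfun[OF Z(1) _ w(2)] by blast
  have "\<forall>\<alpha>\<in>bounded_exponents {..<Suc k} e. c \<alpha> = 0"
    if "\<forall>x\<in>W. poly_eval {..<Suc k} e c (\<lambda>j. (f(k := g)) j x) = 0" for e c
    using alg_indep_extend[OF W _ f indep_f g(1,2) w(1) g(3) that] Z(2) by blast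
  then show ?thesis
    unfolding alg_indep_on_def using f g(1) by (intro exI[of _ "f(k := g)"]) auto
qed

lemma alg_indep_on_chain:
  assumes "\<forall>i\<le>d. zariski_irreducible V (Z i)" and "\<forall>i<d. Z i \<subset> Z (Suc i)"
  shows "alg_indep_on V (Z d) d"
proof -
  have "alg_indep_on V (Z i) i" if "i \<le> d" for i
    using that
  proof (induction i)
    case 0
    then show ?case using assms(1) by (auto intro: alg_indep_on_0 simp: zariski_irreducible_def)
  next
    case (Suc i)
    then show ?case
      using assms by (intro alg_indep_on_Suc[of V _ "Z i"]) (auto simp: zariski_irreducible_def)
  qed
  then show ?thesis by simp
qed

definition bounded_polys :: "'p set \<Rightarrow> nat \<Rightarrow> (('p \<Rightarrow> complex) \<Rightarrow> complex) set" where
  "bounded_polys P m = {h. \<exists>a. \<forall>y\<in>aspace P. h y = poly_eval P m a y}"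

lemma poly_eval_monomial:
  assumes "finite K" "\<beta> \<in> bounded_exponents K e"
  shows "poly_eval K e (\<lambda>\<alpha>. if \<alpha> = \<beta> then c else 0) x = c * (\<Prod>j\<in>K. x j ^ \<beta> j)"
proof -
  have "poly_eval K e (\<lambda>\<alpha>. if \<alpha> = \<beta> then c else 0) x
      = (\<Sum>\<alpha>\<in>bounded_exponents K e. if \<alpha> = \<beta> then c * (\<Prod>j\<in>K. x j ^ \<beta> j) else 0)"
    unfolding poly_eval_def by (intro sum.cong) auto
  then show ?thesis using assms by (simp add: finite_bounded_exponents)
qed

lemma bounded_polys_const:
  assumes "finite P"
  shows "(\<lambda>y. c) \<in> bounded_polys P m"
proof -
  have "(\<lambda>_. 0) \<in> bounded_exponents P m" by (simp add: bounded_exponents_def)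
  then have "c = poly_eval P m (\<lambda>\<beta>. if \<beta> = (\<lambda>_. 0) then c else 0) y" for y
    using assms by (simp add: poly_eval_monomial)
  then show ?thesis unfolding bounded_polys_def by blast
qed

lemma bounded_polys_var:
  assumes "finite P" "q \<in> P" "1 \<le> m"
  shows "(\<lambda>y. y q) \<in> bounded_polys P m"
proof -
  define \<delta> where "\<delta> = (\<lambda>p. if p = q then 1 else 0::nat)"
  have "\<delta> \<in> bounded_exponents P m" using assms by (auto simp: bounded_exponents_def \<delta>_def)
  moreover have "(\<Prod>p\<in>P. y p ^ \<delta> p) = y q" for y :: "_ \<Rightarrow> complex"
    using assms by (simp add: \<delta>_def if_distrib prod.delta cong: if_cong)
  ultimately have "y q = poly_eval P m (\<lambda>\<beta>. if \<beta> = \<delta> then 1 else 0) y" for y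
    using assms by (simp add: poly_eval_monomial)
  then show ?thesis unfolding bounded_polys_def by blast
qed

lemma bounded_polys_mono:
  assumes "finite P" "m \<le> m'" "h \<in> bounded_polys P m"
  shows "h \<in> bounded_polys P m'"
proof -
  obtain a where a: "\<forall>y\<in>aspace P. h y = poly_eval P m a y"
    using assms(3) unfolding bounded_polys_def by blast
  have "poly_eval P m' (\<lambda>\<beta>. if \<beta> \<in> bounded_exponents P m then a \<beta> else 0) y = poly_eval P m a y" for y
    unfolding poly_eval_def
    by (rule trans[OF sum.mono_neutral_right[OF finite_bounded_exponents[OF assms(1)]
          bounded_exponents_mono[OF assms(2)]] sum.cong]) auto
  with a have "\<forall>y\<in>aspace P. h y = poly_eval P m' (\<lambda>\<beta>. if \<beta> \<in> bounded_exponents P m then a \<beta> else 0) y"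
    by simp
  then show ?thesis unfolding bounded_polys_def by blast
qed

lemma bounded_polys_add:
  assumes "h1 \<in> bounded_polys P m" "h2 \<in> bounded_polys P m"
  shows "(\<lambda>y. h1 y + h2 y) \<in> bounded_polys P m"
proof -
  obtain a1 a2 where "\<forall>y\<in>aspace P. h1 y = poly_eval P m a1 y" "\<forall>y\<in>aspace P. h2 y = poly_eval P m a2 y"
    using assms unfolding bounded_polys_def by blast
  then have "\<forall>y\<in>aspace P. h1 y + h2 y = poly_eval P m (\<lambda>\<beta>. a1 \<beta> + a2 \<beta>) y"
    by (simp add: poly_eval_def sum.distrib distrib_right)
  then show ?thesis unfolding bounded_polys_def by blast
qed

lemma bounded_polys_mult:
  assumes P: "finite P" and h1: "h1 \<in> bounded_polys P m1" and h2: "h2 \<in> bounded_polys P m2"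
  shows "(\<lambda>y. h1 y * h2 y) \<in> bounded_polys P (m1 + m2)"
proof -
  obtain a1 where a1: "\<forall>y\<in>aspace P. h1 y = poly_eval P m1 a1 y"
    using h1 unfolding bounded_polys_def by auto
  obtain a2 where a2: "\<forall>y\<in>aspace P. h2 y = poly_eval P m2 a2 y"
    using h2 unfolding bounded_polys_def by auto
  let ?S = "bounded_exponents P m1 \<times> bounded_exponents P m2"
  let ?T = "bounded_exponents P (m1 + m2)"
  let ?add = "\<lambda>(\<beta>1, \<beta>2) p. \<beta>1 p + \<beta>2 p"
  let ?a = "\<lambda>\<gamma>. \<Sum>(\<beta>1, \<beta>2)\<in>{x \<in> ?S. ?add x = \<gamma>}. a1 \<beta>1 * a2 \<beta>2"
  have S: "finite ?S" and T: "finite ?T" using finite_bounded_exponents[OF P] by simp_all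
  have add: "?add ` ?S \<subseteq> ?T" by (auto simp: bounded_exponents_def add_mono)
  have "h1 y * h2 y = poly_eval P (m1 + m2) ?a y" if "y \<in> aspace P" for y
  proof -
    let ?H = "\<lambda>(\<beta>1, \<beta>2). a1 \<beta>1 * a2 \<beta>2 * (\<Prod>p\<in>P. y p ^ (\<beta>1 p + \<beta>2 p))"
    have "h1 y * h2 y = poly_eval P m1 a1 y * poly_eval P m2 a2 y" using a1 a2 that by simp
    also have "\<dots> = (\<Sum>x\<in>?S. ?H x)"
      unfolding poly_eval_def sum_product sum.cartesian_product
      by (intro sum.cong refl) (auto simp: power_add prod.distrib algebra_simps)
    also have "\<dots> = (\<Sum>\<gamma>\<in>?T. \<Sum>x\<in>{x \<in> ?S. ?add x = \<gamma>}. ?H x)"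
      by (rule sum.group[OF S T add, symmetric])
    also have "\<dots> = poly_eval P (m1 + m2) ?a y"
      unfolding poly_eval_def sum_distrib_right
      by (intro sum.cong refl) (auto simp: split_beta)
    finally show ?thesis .
  qed
  then show ?thesis unfolding bounded_polys_def by blast
qed

lemma bounded_polys_power:
  "finite P \<Longrightarrow> h \<in> bounded_polys P m \<Longrightarrow> (\<lambda>y. h y ^ r) \<in> bounded_polys P (m * r)"
  by (induction r) (auto simp: bounded_polys_const dest: bounded_polys_mult)

lemma bounded_polys_prod:
  assumes "finite P" "finite J" "\<And>j. j \<in> J \<Longrightarrow> h j \<in> bounded_polys P (d j)"
  shows "(\<lambda>y. \<Prod>j\<in>J. h j y) \<in> bounded_polys P (\<Sum>j\<in>J. d j)"
  using assms(2,3)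
  by (induction J rule: finite_induct)
    (auto simp: bounded_polys_const[OF assms(1)] bounded_polys_mult[OF assms(1)])

lemma polyfun_in_bounded_polys:
  assumes "polyfun P h" "finite P"
  shows "\<exists>m. h \<in> bounded_polys P m"
  using assms(1)
proof (induction rule: polyfun.induct)
  case (pconst c)
  then show ?case using bounded_polys_const[OF assms(2)] by blast
next
  case (pvar v)
  then show ?case using bounded_polys_var[OF assms(2)] by blast
next
  case (padd f g)
  then obtain m1 m2 where "f \<in> bounded_polys P m1" "g \<in> bounded_polys P m2" by blast
  then have "f \<in> bounded_polys P (max m1 m2)" "g \<in> bounded_polys P (max m1 m2)"
    using bounded_polys_mono[OF assms(2)] by (meson max.cobounded1 max.cobounded2)+
  then show ?case using bounded_polys_add by blast
next
  case (pmult f g)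
  then show ?case using bounded_polys_mult[OF assms(2)] by blast
qed

lemma homogeneous_system_nontrivial_solution:
  fixes a :: "'n \<Rightarrow> 'q \<Rightarrow> complex"
  assumes "finite Q" "finite N" "card Q < card N"
  shows "\<exists>c. (\<exists>\<alpha>\<in>N. c \<alpha> \<noteq> 0) \<and> (\<forall>\<beta>\<in>Q. (\<Sum>\<alpha>\<in>N. c \<alpha> * a \<alpha> \<beta>) = 0)"
  using assms
proof (induction Q arbitrary: N a rule: finite_induct)
  case empty
  then obtain \<alpha>0 where "\<alpha>0 \<in> N" by fastforce
  then show ?case by (intro exI[of _ "\<lambda>\<alpha>. if \<alpha> = \<alpha>0 then 1 else 0"]) auto
next
  case (insert \<beta> Q)
  show ?case
  proof (cases "\<forall>\<alpha>\<in>N. a \<alpha> \<beta> = 0")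
    case True
    then show ?thesis using insert.IH[of N a] insert.prems insert.hyps by auto
  next
    case False
    then obtain \<alpha>0 where \<alpha>0: "\<alpha>0 \<in> N" "a \<alpha>0 \<beta> \<noteq> 0" by blast
    let ?N' = "N - {\<alpha>0}"
    have "card Q < card ?N'" using insert \<alpha>0(1) by simp
    then obtain c' where c': "\<exists>\<alpha>\<in>?N'. c' \<alpha> \<noteq> 0"
      "\<forall>\<gamma>\<in>Q. (\<Sum>\<alpha>\<in>?N'. c' \<alpha> * (a \<alpha> \<gamma> - a \<alpha> \<beta> / a \<alpha>0 \<beta> * a \<alpha>0 \<gamma>)) = 0"
      using insert.IH[of ?N' "\<lambda>\<alpha> \<gamma>. a \<alpha> \<gamma> - a \<alpha> \<beta> / a \<alpha>0 \<beta> * a \<alpha>0 \<gamma>"] insert.prems by auto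
    define s where "s = (\<Sum>\<alpha>\<in>?N'. c' \<alpha> * a \<alpha> \<beta>)"
    define c where "c \<alpha> = (if \<alpha> = \<alpha>0 then - s / a \<alpha>0 \<beta> else c' \<alpha>)" for \<alpha>
    have sum_c: "(\<Sum>\<alpha>\<in>N. c \<alpha> * a \<alpha> \<gamma>) = - s / a \<alpha>0 \<beta> * a \<alpha>0 \<gamma> + (\<Sum>\<alpha>\<in>?N'. c' \<alpha> * a \<alpha> \<gamma>)" for \<gamma>
    proof -
      have "(\<Sum>\<alpha>\<in>?N'. c \<alpha> * a \<alpha> \<gamma>) = (\<Sum>\<alpha>\<in>?N'. c' \<alpha> * a \<alpha> \<gamma>)"
        by (rule sum.cong) (auto simp: c_def)
      then show ?thesis
        using sum.remove[OF insert.prems(1) \<alpha>0(1), of "\<lambda>\<alpha>. c \<alpha> * a \<alpha> \<gamma>"] by (simp add: c_def[of \<alpha>0])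
    qed
    have "(\<Sum>\<alpha>\<in>N. c \<alpha> * a \<alpha> \<beta>) = 0" unfolding sum_c s_def using \<alpha>0(2) by simp
    moreover have "(\<Sum>\<alpha>\<in>N. c \<alpha> * a \<alpha> \<gamma>) = 0" if "\<gamma> \<in> Q" for \<gamma>
    proof -
      have "(\<Sum>\<alpha>\<in>N. c \<alpha> * a \<alpha> \<gamma>)
          = (\<Sum>\<alpha>\<in>?N'. c' \<alpha> * (a \<alpha> \<gamma> - a \<alpha> \<beta> / a \<alpha>0 \<beta> * a \<alpha>0 \<gamma>))"
        unfolding sum_c s_def
        by (simp add: algebra_simps sum_subtractf sum_distrib_left sum_distrib_right sum_divide_distrib)
      then show ?thesis using c'(2) that by simp
    qed
    moreover have "\<exists>\<alpha>\<in>N. c \<alpha> \<noteq> 0" using c'(1) by (auto simp: c_def)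
    ultimately show ?thesis by (intro exI[of _ c]) auto
  qed
qed

lemma monomial_count_less:
  fixes K D k :: nat
  assumes "1 \<le> K" "D < k"
  shows "Suc (K * K ^ D) ^ D < Suc (K ^ D) ^ k"
proof -
  have "Suc (K * K ^ D) ^ D \<le> (K * Suc (K ^ D)) ^ D"
    using assms(1) by (intro power_mono) auto
  also have "\<dots> = K ^ D * Suc (K ^ D) ^ D" by (rule power_mult_distrib)
  also have "\<dots> < Suc (K ^ D) ^ Suc D" by simp
  also have "\<dots> \<le> Suc (K ^ D) ^ k" using assms(2) by (intro power_increasing) auto
  finally show ?thesis .
qed

lemma bounded_polys_monomial:
  assumes P: "finite P" and g: "\<And>j. j < k \<Longrightarrow> g j \<in> bounded_polys P m"
    and \<alpha>: "\<alpha> \<in> bounded_exponents {..<k} e"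
  shows "(\<lambda>y. \<Prod>j<k. g j y ^ \<alpha> j) \<in> bounded_polys P (m * k * e)"
proof -
  have "(\<lambda>y. \<Prod>j<k. g j y ^ \<alpha> j) \<in> bounded_polys P (\<Sum>j<k. m * \<alpha> j)"
    using g by (intro bounded_polys_prod[OF P] bounded_polys_power[OF P]) auto
  moreover have "(\<Sum>j<k. m * \<alpha> j) \<le> (\<Sum>j<k. m * e)"
    using \<alpha> by (intro sum_mono mult_le_mono2) (auto simp: bounded_exponents_def)
  ultimately show ?thesis by (auto simp: mult_ac intro: bounded_polys_mono[OF P, rotated])
qed

text \<open>The monomials of degree at most e in the g j outnumber the monomials in P of the resulting
  degree, so some nontrivial linear combination of them vanishes.\<close>

lemma bounded_polys_alg_dependent:
  assumes P: "finite P" and "card P < k" and g: "\<And>j. j < k \<Longrightarrow> g j \<in> bounded_polys P m"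
  obtains e c where "\<exists>\<alpha>\<in>bounded_exponents {..<k} e. c \<alpha> \<noteq> 0"
    and "\<And>y. y \<in> aspace P \<Longrightarrow> poly_eval {..<k} e c (\<lambda>j. g j y) = 0"
proof -
  define K where "K = Suc m * k"
  define e where "e = K ^ card P"
  define N where "N = bounded_exponents {..<k} e"
  define Q where "Q = bounded_exponents P (K * e)"
  have "g j \<in> bounded_polys P (Suc m)" if "j < k" for j
    using g[OF that] by (rule bounded_polys_mono[OF P, rotated]) simp
  then have "(\<lambda>y. \<Prod>j<k. g j y ^ \<alpha> j) \<in> bounded_polys P (K * e)" if "\<alpha> \<in> N" for \<alpha>
    using that unfolding K_def N_def by (rule bounded_polys_monomial[OF P])
  then have "\<forall>\<alpha>\<in>N. \<exists>a. \<forall>y\<in>aspace P. (\<Prod>j<k. g j y ^ \<alpha> j) = poly_eval P (K * e) a y"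
    unfolding bounded_polys_def by blast
  from bchoice[OF this] obtain A
    where "\<forall>\<alpha>\<in>N. \<forall>y\<in>aspace P. (\<Prod>j<k. g j y ^ \<alpha> j) = poly_eval P (K * e) (A \<alpha>) y"
    by blast
  then have A: "\<And>\<alpha> y. \<alpha> \<in> N \<Longrightarrow> y \<in> aspace P \<Longrightarrow>
      (\<Prod>j<k. g j y ^ \<alpha> j) = (\<Sum>\<beta>\<in>Q. A \<alpha> \<beta> * (\<Prod>p\<in>P. y p ^ \<beta> p))"
    unfolding poly_eval_def Q_def by blast
  have "card Q = Suc (K * K ^ card P) ^ card P" "card N = Suc (K ^ card P) ^ k"
    unfolding Q_def N_def e_def by (simp_all add: card_bounded_exponents P)
  moreover have "1 \<le> K" using \<open>card P < k\<close> by (simp add: K_def)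
  ultimately have "card Q < card N" using monomial_count_less[of K "card P" k] \<open>card P < k\<close> by simp
  then obtain c where c: "\<exists>\<alpha>\<in>N. c \<alpha> \<noteq> 0" "\<forall>\<beta>\<in>Q. (\<Sum>\<alpha>\<in>N. c \<alpha> * A \<alpha> \<beta>) = 0"
    using homogeneous_system_nontrivial_solution[of Q N A] P
    by (auto simp: Q_def N_def finite_bounded_exponents)
  have "poly_eval {..<k} e c (\<lambda>j. g j y) = 0" if y: "y \<in> aspace P" for y
  proof -
    have "poly_eval {..<k} e c (\<lambda>j. g j y) = (\<Sum>\<alpha>\<in>N. \<Sum>\<beta>\<in>Q. c \<alpha> * A \<alpha> \<beta> * (\<Prod>p\<in>P. y p ^ \<beta> p))"
      unfolding poly_eval_def N_def[symmetric] using A[OF _ y]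
      by (simp add: sum_distrib_left mult.assoc)
    also have "\<dots> = (\<Sum>\<beta>\<in>Q. (\<Sum>\<alpha>\<in>N. c \<alpha> * A \<alpha> \<beta>) * (\<Prod>p\<in>P. y p ^ \<beta> p))"
      by (subst sum.swap) (simp add: sum_distrib_right)
    also have "\<dots> = 0" using c(2) by simp
    finally show ?thesis .
  qed
  with c(1) show thesis using that unfolding N_def by blast
qed

lemma not_alg_indep_on_closure_image:
  fixes \<phi> :: "('p \<Rightarrow> complex) \<Rightarrow> ('v \<Rightarrow> complex)"
  assumes P: "finite P" and S: "S \<subseteq> \<phi> ` aspace P" "S \<subseteq> aspace V"
    and \<phi>: "\<And>v. v \<in> V \<Longrightarrow> polyfun P (\<lambda>y. \<phi> y v)" and "card P < k"
  shows "\<not> alg_indep_on V (zariski_closure V S) k"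
proof
  assume "alg_indep_on V (zariski_closure V S) k"
  then obtain f where f: "\<forall>j<k. polyfun V (f j)"
    and indep: "\<And>e c. \<forall>x\<in>zariski_closure V S. poly_eval {..<k} e c (\<lambda>j. f j x) = 0 \<Longrightarrow>
      \<forall>\<alpha>\<in>bounded_exponents {..<k} e. c \<alpha> = 0"
    unfolding alg_indep_on_def by blast
  have "\<exists>m. (\<lambda>y. f j (\<phi> y)) \<in> bounded_polys P m" if "j < k" for j
    using f that by (intro polyfun_in_bounded_polys[OF _ P] polyfun_compose[OF _ \<phi>]) auto
  then obtain m where m: "\<And>j. j < k \<Longrightarrow> (\<lambda>y. f j (\<phi> y)) \<in> bounded_polys P (m j)" by metis
  have "(\<lambda>y. f j (\<phi> y)) \<in> bounded_polys P (\<Sum>j<k. m j)" if "j < k" for j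
    using that by (intro bounded_polys_mono[OF P _ m]) (auto intro: member_le_sum)
  then obtain e c where c: "\<exists>\<alpha>\<in>bounded_exponents {..<k} e. c \<alpha> \<noteq> 0"
    and rel: "\<And>y. y \<in> aspace P \<Longrightarrow> poly_eval {..<k} e c (\<lambda>j. f j (\<phi> y)) = 0"
    using bounded_polys_alg_dependent[OF P \<open>card P < k\<close>, of "\<lambda>j y. f j (\<phi> y)"] by blast
  have "poly_eval {..<k} e c (\<lambda>j. f j x) = 0" if "x \<in> zariski_closure V S" for x
    by (rule polyfun_vanishes_on_closure[OF polyfun_poly_eval S(2) _ that]) (use f rel S(1) in auto)
  then show False using indep c by blast
qed

lemma zariski_dim_closure_image_le:
  fixes \<phi> :: "('p \<Rightarrow> complex) \<Rightarrow> ('v \<Rightarrow> complex)"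
  assumes "finite P" "S \<subseteq> \<phi> ` aspace P" "S \<subseteq> aspace V" "\<And>v. v \<in> V \<Longrightarrow> polyfun P (\<lambda>y. \<phi> y v)"
  shows "zariski_dim V (zariski_closure V S) \<le> card P"
  unfolding zariski_dim_def
proof (rule Sup_least, clarify)
  fix d Z
  assume chain: "\<forall>i\<le>d. zariski_irreducible V (Z i) \<and> Z i \<subseteq> zariski_closure V S"
    "\<forall>i<d. Z i \<subset> Z (Suc i)"
  then have "alg_indep_on V (zariski_closure V S) d"
    using alg_indep_on_chain[of d V Z] by (auto intro: alg_indep_on_mono)
  then have "\<not> card P < d"
    using not_alg_indep_on_closure_image[of P S \<phi> V d] assms by blast
  then show "enat d \<le> enat (card P)" by simp
qed

lemma enat_le_zariski_dim:
  assumes "\<forall>i\<le>d. zariski_irreducible V (Z i) \<and> Z i \<subseteq> X" "\<forall>i<d. Z i \<subset> Z (Suc i)"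
  shows "enat d \<le> zariski_dim V X"
  unfolding zariski_dim_def by (rule Sup_upper) (use assms in blast)

section \<open>Bit strings and matrices indexed by them\<close>

lemma bits_0: "bits 0 = {\<lambda>_. False}"
  by (auto simp: bits_def)

lemma bits_Suc: "bits (Suc n) = (\<lambda>(\<gamma>, b). \<gamma>(n := b)) ` (bits n \<times> UNIV)"
proof (intro equalityI subsetI)
  fix \<chi> assume "\<chi> \<in> bits (Suc n)"
  then have "(\<chi>(n := False), \<chi> n) \<in> bits n \<times> UNIV"
    by (auto simp: bits_def)
  then show "\<chi> \<in> (\<lambda>(\<gamma>, b). \<gamma>(n := b)) ` (bits n \<times> UNIV)"
    by (rule rev_image_eqI) simp
qed (auto simp: bits_def)

lemma inj_on_bits_Suc: "inj_on (\<lambda>(\<gamma>, b). \<gamma>(n := b)) (bits n \<times> UNIV)"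
proof (rule inj_onI, clarify)
  fix \<gamma>1 b1 \<gamma>2 b2 assume "\<gamma>1 \<in> bits n" "\<gamma>2 \<in> bits n" and eq: "\<gamma>1(n := b1) = \<gamma>2(n := b2)"
  then have "\<gamma>1 n = \<gamma>2 n" by (simp add: bits_def)
  then have "\<gamma>1 i = \<gamma>2 i" for i
    using fun_cong[OF eq, of i] by (cases "i = n") auto
  then show "\<gamma>1 = \<gamma>2 \<and> b1 = b2"
    using fun_cong[OF eq, of n] by auto
qed

lemma finite_bits: "finite (bits n)"
  by (induction n) (simp_all add: bits_0 bits_Suc)

lemma card_bits: "card (bits n) = 2 ^ n"
proof (induction n)
  case (Suc n)
  have "card (bits (Suc n)) = card (bits n \<times> (UNIV :: bool set))"
    unfolding bits_Suc by (rule card_image[OF inj_on_bits_Suc])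
  then show ?case using Suc by (simp add: card_cartesian_product)
qed (simp add: bits_0)

lemma sum_bits_Suc:
  "(\<Sum>\<chi>\<in>bits (Suc n). F \<chi>) = (\<Sum>\<gamma>\<in>bits n. F (\<gamma>(n := False)) + F (\<gamma>(n := True)))"
proof -
  have "(\<Sum>\<chi>\<in>bits (Suc n). F \<chi>) = (\<Sum>(\<gamma>, b)\<in>bits n \<times> UNIV. F (\<gamma>(n := b)))"
    unfolding bits_Suc by (subst sum.reindex[OF inj_on_bits_Suc]) (simp add: split_beta)
  also have "\<dots> = (\<Sum>\<gamma>\<in>bits n. F (\<gamma>(n := False)) + F (\<gamma>(n := True)))"
    unfolding sum.cartesian_product[symmetric] by (simp add: UNIV_bool add.commute)
  finally show ?thesis .
qed

lemma sum_bits_prod: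
  fixes F :: "nat \<Rightarrow> bool \<Rightarrow> complex"
  shows "(\<Sum>\<gamma>\<in>bits n. \<Prod>i<n. F i (\<gamma> i)) = (\<Prod>i<n. F i False + F i True)"
proof (induction n)
  case (Suc n)
  have "(\<Prod>i<Suc n. F i ((\<gamma>(n := b)) i)) = (\<Prod>i<n. F i (\<gamma> i)) * F n b" for \<gamma> b
  proof -
    have "(\<Prod>i<n. F i ((\<gamma>(n := b)) i)) = (\<Prod>i<n. F i (\<gamma> i))" by (intro prod.cong) auto
    then show ?thesis by (simp add: prod.lessThan_Suc)
  qed
  then have "(\<Sum>\<gamma>\<in>bits (Suc n). \<Prod>i<Suc n. F i (\<gamma> i))
      = (\<Sum>\<gamma>\<in>bits n. (\<Prod>i<n. F i (\<gamma> i)) * (F n False + F n True))"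
    by (simp add: sum_bits_Suc distrib_left)
  then show ?case using Suc by (simp add: prod.lessThan_Suc flip: sum_distrib_right)
qed (simp add: bits_0)

lemma bits_eqI: "\<chi> \<in> bits n \<Longrightarrow> \<psi> \<in> bits n \<Longrightarrow> (\<And>i. i < n \<Longrightarrow> \<chi> i = \<psi> i) \<Longrightarrow> \<chi> = \<psi>"
  by (rule ext) (metis bits_def mem_Collect_eq not_le)

type_synonym bmat = "(nat \<Rightarrow> bool) \<times> (nat \<Rightarrow> bool) \<Rightarrow> complex"
type_synonym mat2 = "bool \<Rightarrow> bool \<Rightarrow> complex"

definition bmat_mult :: "nat \<Rightarrow> bmat \<Rightarrow> bmat \<Rightarrow> bmat" where
  "bmat_mult n A B = (\<lambda>(\<chi>, \<psi>).
     if \<chi> \<in> bits n \<and> \<psi> \<in> bits n then \<Sum>\<gamma>\<in>bits n. A (\<chi>, \<gamma>) * B (\<gamma>, \<psi>) else 0)"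

definition bmat_one :: "nat \<Rightarrow> bmat" where
  "bmat_one n = (\<lambda>(\<chi>, \<psi>). if \<chi> \<in> bits n \<and> \<psi> \<in> bits n \<and> \<chi> = \<psi> then 1 else 0)"

definition bmat_trace :: "nat \<Rightarrow> bmat \<Rightarrow> complex" where
  "bmat_trace n A = (\<Sum>\<chi>\<in>bits n. A (\<chi>, \<chi>))"

definition bmat_supported :: "nat \<Rightarrow> bmat \<Rightarrow> bool" where
  "bmat_supported n A \<longleftrightarrow> (\<forall>\<chi> \<psi>. \<not> (\<chi> \<in> bits n \<and> \<psi> \<in> bits n) \<longrightarrow> A (\<chi>, \<psi>) = 0)"

definition mat2_mult :: "mat2 \<Rightarrow> mat2 \<Rightarrow> mat2" where
  "mat2_mult A B = (\<lambda>a c. A a False * B False c + A a True * B True c)"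

definition mat2_one :: mat2 where
  "mat2_one = (\<lambda>a c. if a = c then 1 else 0)"

definition kron :: "nat \<Rightarrow> (nat \<Rightarrow> mat2) \<Rightarrow> bmat" where
  "kron n C = (\<lambda>(\<chi>, \<psi>). if \<chi> \<in> bits n \<and> \<psi> \<in> bits n then \<Prod>i<n. C i (\<chi> i) (\<psi> i) else 0)"

lemma bmat_mult_apply:
  "\<chi> \<in> bits n \<Longrightarrow> \<psi> \<in> bits n \<Longrightarrow> bmat_mult n A B (\<chi>, \<psi>) = (\<Sum>\<gamma>\<in>bits n. A (\<chi>, \<gamma>) * B (\<gamma>, \<psi>))"
  by (simp add: bmat_mult_def)

lemma bmat_mult_outside: "\<not> (\<chi> \<in> bits n \<and> \<psi> \<in> bits n) \<Longrightarrow> bmat_mult n A B (\<chi>, \<psi>) = 0"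
  unfolding bmat_mult_def by auto

lemma kron_apply:
  "\<chi> \<in> bits n \<Longrightarrow> \<psi> \<in> bits n \<Longrightarrow> kron n C (\<chi>, \<psi>) = (\<Prod>i<n. C i (\<chi> i) (\<psi> i))"
  by (simp add: kron_def)

lemma kron_outside: "\<not> (\<chi> \<in> bits n \<and> \<psi> \<in> bits n) \<Longrightarrow> kron n C (\<chi>, \<psi>) = 0"
  unfolding kron_def by auto

lemma bmat_supported_mult: "bmat_supported n (bmat_mult n A B)"
  by (simp add: bmat_supported_def bmat_mult_outside)

lemma bmat_supported_aspace: "\<rho> \<in> aspace (bits n \<times> bits n) \<Longrightarrow> bmat_supported n \<rho>"
  unfolding bmat_supported_def aspace_def by auto

lemma bmat_mult_in_aspace: "bmat_mult n A B \<in> aspace (bits n \<times> bits n)"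
  unfolding aspace_def by (auto simp: bmat_mult_outside)

lemma bmat_mult_assoc: "bmat_mult n (bmat_mult n A B) C = bmat_mult n A (bmat_mult n B C)"
proof (intro ext, clarify)
  fix \<chi> \<psi>
  show "bmat_mult n (bmat_mult n A B) C (\<chi>, \<psi>) = bmat_mult n A (bmat_mult n B C) (\<chi>, \<psi>)"
  proof (cases "\<chi> \<in> bits n \<and> \<psi> \<in> bits n")
    case True
    then have "bmat_mult n (bmat_mult n A B) C (\<chi>, \<psi>)
        = (\<Sum>\<gamma>\<in>bits n. \<Sum>\<delta>\<in>bits n. A (\<chi>, \<delta>) * B (\<delta>, \<gamma>) * C (\<gamma>, \<psi>))"
      by (simp add: bmat_mult_apply sum_distrib_right)
    also have "\<dots> = (\<Sum>\<delta>\<in>bits n. A (\<chi>, \<delta>) * (\<Sum>\<gamma>\<in>bits n. B (\<delta>, \<gamma>) * C (\<gamma>, \<psi>)))"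
      by (subst sum.swap) (simp add: sum_distrib_left mult.assoc)
    also have "\<dots> = bmat_mult n A (bmat_mult n B C) (\<chi>, \<psi>)"
      using True by (simp add: bmat_mult_apply cong: sum.cong)
    finally show ?thesis .
  qed (simp add: bmat_mult_outside)
qed

lemma bmat_mult_one_left:
  assumes "bmat_supported n A"
  shows "bmat_mult n (bmat_one n) A = A"
proof (intro ext, clarify)
  fix \<chi> \<psi>
  show "bmat_mult n (bmat_one n) A (\<chi>, \<psi>) = A (\<chi>, \<psi>)"
  proof (cases "\<chi> \<in> bits n \<and> \<psi> \<in> bits n")
    case True
    then have "bmat_mult n (bmat_one n) A (\<chi>, \<psi>) = (\<Sum>\<gamma>\<in>bits n. if \<gamma> = \<chi> then A (\<chi>, \<psi>) else 0)"
      by (simp add: bmat_mult_apply bmat_one_def) (intro sum.cong refl, auto)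
    then show ?thesis using True by (simp add: finite_bits)
  qed (use assms in \<open>simp add: bmat_mult_outside bmat_supported_def\<close>)
qed

lemma bmat_mult_one_right:
  assumes "bmat_supported n A"
  shows "bmat_mult n A (bmat_one n) = A"
proof (intro ext, clarify)
  fix \<chi> \<psi>
  show "bmat_mult n A (bmat_one n) (\<chi>, \<psi>) = A (\<chi>, \<psi>)"
  proof (cases "\<chi> \<in> bits n \<and> \<psi> \<in> bits n")
    case True
    then have "bmat_mult n A (bmat_one n) (\<chi>, \<psi>) = (\<Sum>\<gamma>\<in>bits n. if \<gamma> = \<psi> then A (\<chi>, \<psi>) else 0)"
      by (simp add: bmat_mult_apply bmat_one_def) (intro sum.cong refl, auto)
    then show ?thesis using True by (simp add: finite_bits)
  qed (use assms in \<open>simp add: bmat_mult_outside bmat_supported_def\<close>)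
qed

lemma bmat_trace_mult_commute: "bmat_trace n (bmat_mult n A B) = bmat_trace n (bmat_mult n B A)"
  unfolding bmat_trace_def
  by (simp add: bmat_mult_apply mult.commute cong: sum.cong) (rule sum.swap)

lemma kron_mult: "bmat_mult n (kron n A) (kron n B) = kron n (\<lambda>i. mat2_mult (A i) (B i))"
proof (intro ext, clarify)
  fix \<chi> \<psi>
  show "bmat_mult n (kron n A) (kron n B) (\<chi>, \<psi>) = kron n (\<lambda>i. mat2_mult (A i) (B i)) (\<chi>, \<psi>)"
  proof (cases "\<chi> \<in> bits n \<and> \<psi> \<in> bits n")
    case True
    then have "bmat_mult n (kron n A) (kron n B) (\<chi>, \<psi>)
        = (\<Sum>\<gamma>\<in>bits n. \<Prod>i<n. A i (\<chi> i) (\<gamma> i) * B i (\<gamma> i) (\<psi> i))"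
      by (simp add: bmat_mult_apply kron_apply prod.distrib)
    also have "\<dots> = kron n (\<lambda>i. mat2_mult (A i) (B i)) (\<chi>, \<psi>)"
      using True sum_bits_prod[of "\<lambda>i b. A i (\<chi> i) b * B i b (\<psi> i)" n]
      by (simp add: kron_apply mat2_mult_def)
    finally show ?thesis .
  qed (simp add: bmat_mult_outside kron_outside)
qed

lemma kron_one: "kron n (\<lambda>i. mat2_one) = bmat_one n"
proof (intro ext, clarify)
  fix \<chi> \<psi>
  have "(\<Prod>i<n. mat2_one (\<chi> i) (\<psi> i)) = 0"
    if in_bits: "\<chi> \<in> bits n" "\<psi> \<in> bits n" and ne: "\<chi> \<noteq> \<psi>"
  proof -
    obtain i where "i < n" "\<chi> i \<noteq> \<psi> i" using bits_eqI[OF in_bits] ne by blast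
    then show ?thesis by (intro prod_zero) (auto simp: mat2_one_def)
  qed
  then show "kron n (\<lambda>i. mat2_one) (\<chi>, \<psi>) = bmat_one n (\<chi>, \<psi>)"
    by (auto simp: kron_def bmat_one_def mat2_one_def)
qed

lemma polyfun_If:
  "(c \<Longrightarrow> polyfun V f) \<Longrightarrow> (\<not> c \<Longrightarrow> polyfun V g) \<Longrightarrow> polyfun V (\<lambda>x. if c then f x else g x)"
  by (cases c) simp_all

lemma polyfun_bmat_mult:
  assumes "\<And>v. polyfun U (\<lambda>y. A y v)" "\<And>v. polyfun U (\<lambda>y. B y v)"
  shows "polyfun U (\<lambda>y. bmat_mult n (A y) (B y) v)"
  unfolding bmat_mult_def
  by (cases v) (auto intro!: polyfun_If polyfun.pconst polyfun_sum polyfun.pmult assms)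

lemma polyfun_kron:
  assumes "\<And>i a c. i < n \<Longrightarrow> polyfun U (\<lambda>y. C y i a c)"
  shows "polyfun U (\<lambda>y. kron n (C y) v)"
  unfolding kron_def
  by (cases v) (auto intro!: polyfun_If polyfun.pconst polyfun_prod assms)

section \<open>A polynomial parametrization of the X-states\<close>

definition frame2 :: "complex \<Rightarrow> complex \<Rightarrow> mat2" where
  "frame2 s t = (\<lambda>a c. if \<not> a \<and> \<not> c then 1 else if \<not> a \<and> c then s
     else if a \<and> \<not> c then t else 1 + t * s)"

definition frame2_inv :: "complex \<Rightarrow> complex \<Rightarrow> mat2" where
  "frame2_inv s t = (\<lambda>a c. if \<not> a \<and> \<not> c then 1 + s * t else if \<not> a \<and> c then - s
     else if a \<and> \<not> c then - t else 1)"

lemma mat2_mult_frame2_frame2_inv: "mat2_mult (frame2 s t) (frame2_inv s t) = mat2_one"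
  by (intro ext) (auto simp: mat2_mult_def frame2_def frame2_inv_def mat2_one_def algebra_simps)

lemma mat2_mult_frame2_inv_frame2: "mat2_mult (frame2_inv s t) (frame2 s t) = mat2_one"
  by (intro ext) (auto simp: mat2_mult_def frame2_def frame2_inv_def mat2_one_def algebra_simps)

lemma frame2_0: "frame2 0 0 = mat2_one" and frame2_inv_0: "frame2_inv 0 0 = mat2_one"
  by (auto intro!: ext simp: frame2_def frame2_inv_def mat2_one_def)

lemma polyfun_frame2:
  "polyfun U s \<Longrightarrow> polyfun U t \<Longrightarrow> polyfun U (\<lambda>y. frame2 (s y) (t y) a c)"
  unfolding frame2_def by (cases a; cases c) (simp_all add: polyfun.intros)

lemma polyfun_frame2_inv:
  "polyfun U s \<Longrightarrow> polyfun U t \<Longrightarrow> polyfun U (\<lambda>y. frame2_inv (s y) (t y) a c)"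
  unfolding frame2_inv_def by (cases a; cases c) (simp_all add: polyfun_uminus polyfun.intros)

text \<open>A parameter y encodes the matrix W M W^-1: the entries of M = block_mat n y, which is block
  diagonal for the parity decomposition, are the coordinates y (Inl (\<chi>, \<psi>)), except that its
  first diagonal entry is determined by trace one; W = frame n y is the Kronecker product of the
  unimodular matrices frame2 s_i t_i with s_i = y (Inr (i, False)) and t_i = y (Inr (i, True)).\<close>

type_synonym param = "((nat \<Rightarrow> bool) \<times> (nat \<Rightarrow> bool)) + (nat \<times> bool)"

definition zero_bits :: "nat \<Rightarrow> bool" where
  "zero_bits = (\<lambda>_. False)"

definition block_coords :: "nat \<Rightarrow> ((nat \<Rightarrow> bool) \<times> (nat \<Rightarrow> bool)) set" where
  "block_coords n = {(\<chi>, \<psi>). \<chi> \<in> bits n \<and> \<psi> \<in> bits n \<and> parity n \<chi> = parity n \<psi> \<and>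
     (\<chi>, \<psi>) \<noteq> (zero_bits, zero_bits)}"

definition params :: "nat \<Rightarrow> param set" where
  "params n = Inl ` block_coords n \<union> Inr ` ({..<n} \<times> UNIV)"

definition frame :: "nat \<Rightarrow> (param \<Rightarrow> complex) \<Rightarrow> bmat" where
  "frame n y = kron n (\<lambda>i. frame2 (y (Inr (i, False))) (y (Inr (i, True))))"

definition frame_inv :: "nat \<Rightarrow> (param \<Rightarrow> complex) \<Rightarrow> bmat" where
  "frame_inv n y = kron n (\<lambda>i. frame2_inv (y (Inr (i, False))) (y (Inr (i, True))))"

definition block_mat :: "nat \<Rightarrow> (param \<Rightarrow> complex) \<Rightarrow> bmat" where
  "block_mat n y = (\<lambda>(\<chi>, \<psi>).
     if \<chi> \<in> bits n \<and> \<psi> \<in> bits n \<and> parity n \<chi> = parity n \<psi> then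
       (if \<chi> = zero_bits \<and> \<psi> = zero_bits then 1 - (\<Sum>\<chi>'\<in>bits n - {zero_bits}. y (Inl (\<chi>', \<chi>')))
        else y (Inl (\<chi>, \<psi>)))
     else 0)"

definition xparam :: "nat \<Rightarrow> (param \<Rightarrow> complex) \<Rightarrow> bmat" where
  "xparam n y = bmat_mult n (bmat_mult n (frame n y) (block_mat n y)) (frame_inv n y)"

lemma zero_bits_in_bits: "zero_bits \<in> bits n"
  by (simp add: zero_bits_def bits_def)

lemma frame_inv_mult_frame: "bmat_mult n (frame_inv n y) (frame n y) = bmat_one n"
  unfolding frame_inv_def frame_def kron_mult mat2_mult_frame2_inv_frame2 kron_one ..

lemma frame_mult_frame_inv: "bmat_mult n (frame n y) (frame_inv n y) = bmat_one n"
  unfolding frame_inv_def frame_def kron_mult mat2_mult_frame2_frame2_inv kron_one ..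

lemma bmat_supported_block_mat: "bmat_supported n (block_mat n y)"
  unfolding bmat_supported_def block_mat_def by auto

lemma block_mat_offblock: "parity n \<alpha> \<noteq> parity n \<beta> \<Longrightarrow> block_mat n y (\<alpha>, \<beta>) = 0"
  by (simp add: block_mat_def)

lemma bmat_trace_block_mat: "bmat_trace n (block_mat n y) = 1"
proof -
  have "bmat_trace n (block_mat n y)
      = block_mat n y (zero_bits, zero_bits) + (\<Sum>\<chi>\<in>bits n - {zero_bits}. block_mat n y (\<chi>, \<chi>))"
    unfolding bmat_trace_def by (rule sum.remove[OF finite_bits zero_bits_in_bits])
  also have "(\<Sum>\<chi>\<in>bits n - {zero_bits}. block_mat n y (\<chi>, \<chi>))
      = (\<Sum>\<chi>\<in>bits n - {zero_bits}. y (Inl (\<chi>, \<chi>)))"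
    by (intro sum.cong refl) (auto simp: block_mat_def)
  finally show ?thesis using zero_bits_in_bits[of n] by (simp add: block_mat_def)
qed

lemma xparam_mult_frame: "bmat_mult n (xparam n y) (frame n y) = bmat_mult n (frame n y) (block_mat n y)"
  unfolding xparam_def bmat_mult_assoc frame_inv_mult_frame
  by (simp add: bmat_mult_one_right bmat_supported_block_mat flip: bmat_mult_assoc)

lemma bmat_trace_xparam: "bmat_trace n (xparam n y) = 1"
proof -
  have "bmat_trace n (xparam n y)
      = bmat_trace n (bmat_mult n (frame_inv n y) (bmat_mult n (frame n y) (block_mat n y)))"
    unfolding xparam_def by (rule bmat_trace_mult_commute)
  also have "\<dots> = bmat_trace n (block_mat n y)"
    by (simp add: frame_inv_mult_frame bmat_mult_one_left bmat_supported_block_mat flip: bmat_mult_assoc)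
  finally show ?thesis by (simp add: bmat_trace_block_mat)
qed

lemma xparam_in_aspace: "xparam n y \<in> aspace (bits n \<times> bits n)"
  unfolding xparam_def by (rule bmat_mult_in_aspace)

lemma polyfun_frame: "polyfun (params n) (\<lambda>y. frame n y v)"
  and polyfun_frame_inv: "polyfun (params n) (\<lambda>y. frame_inv n y v)"
  unfolding frame_def frame_inv_def
  by (auto intro!: polyfun_kron polyfun_frame2 polyfun_frame2_inv polyfun.pvar simp: params_def)

lemma polyfun_block_mat: "polyfun (params n) (\<lambda>y. block_mat n y v)"
  unfolding block_mat_def
  by (cases v) (auto intro!: polyfun_If polyfun.pconst polyfun_diff polyfun_sum polyfun.pvar
      simp: params_def block_coords_def)

lemma polyfun_xparam: "polyfun (params n) (\<lambda>y. xparam n y v)"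
  unfolding xparam_def by (intro polyfun_bmat_mult polyfun_frame polyfun_frame_inv polyfun_block_mat)

definition frame_basis :: "(param \<Rightarrow> complex) \<Rightarrow> nat \<Rightarrow> bool \<Rightarrow> bool \<Rightarrow> complex" where
  "frame_basis y i a c = frame2 (y (Inr (i, False))) (y (Inr (i, True))) c a"

lemma tensor_vec_frame_basis: "\<psi> \<in> bits n \<Longrightarrow> tensor_vec n (frame_basis y) \<psi> \<chi> = frame n y (\<chi>, \<psi>)"
  unfolding tensor_vec_def frame_def frame_basis_def by (simp add: kron_def)

lemma is_basis_family_frame_basis: "is_basis_family n (frame_basis y)"
  unfolding is_basis_family_def frame_basis_def frame2_def by (simp add: algebra_simps)

lemma xparam_preserves_parity_span:
  assumes "v \<in> parity_span n (frame_basis y) p"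
  shows "mat_apply n (xparam n y) v \<in> parity_span n (frame_basis y) p"
proof -
  let ?B = "{\<psi> \<in> bits n. parity n \<psi> = p}"
  let ?M = "block_mat n y" and ?W = "frame n y"
  obtain c where c: "v = (\<lambda>\<chi>. \<Sum>\<psi>\<in>?B. c \<psi> * tensor_vec n (frame_basis y) \<psi> \<chi>)"
    using assms unfolding parity_span_def by blast
  define c' where "c' \<alpha> = (\<Sum>\<psi>\<in>?B. c \<psi> * ?M (\<alpha>, \<psi>))" for \<alpha>
  have v: "v \<gamma> = (\<Sum>\<psi>\<in>?B. c \<psi> * ?W (\<gamma>, \<psi>))" for \<gamma>
    unfolding c by (intro sum.cong refl) (simp add: tensor_vec_frame_basis)
  have "mat_apply n (xparam n y) v \<chi> = (\<Sum>\<alpha>\<in>?B. c' \<alpha> * tensor_vec n (frame_basis y) \<alpha> \<chi>)" for \<chi>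
  proof (cases "\<chi> \<in> bits n")
    case True
    have "mat_apply n (xparam n y) v \<chi> = (\<Sum>\<psi>\<in>?B. c \<psi> * bmat_mult n (xparam n y) ?W (\<chi>, \<psi>))"
      using True unfolding mat_apply_def v
      by (simp add: bmat_mult_apply sum_distrib_left sum_distrib_right sum.swap[of _ "bits n"] algebra_simps)
    also have "\<dots> = (\<Sum>\<psi>\<in>?B. c \<psi> * (\<Sum>\<alpha>\<in>bits n. ?W (\<chi>, \<alpha>) * ?M (\<alpha>, \<psi>)))"
      using True by (simp add: xparam_mult_frame bmat_mult_apply)
    also have "\<dots> = (\<Sum>\<alpha>\<in>bits n. c' \<alpha> * ?W (\<chi>, \<alpha>))"
      unfolding c'_def by (simp add: sum_distrib_left sum_distrib_right sum.swap[of _ ?B] algebra_simps)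
    also have "\<dots> = (\<Sum>\<alpha>\<in>?B. c' \<alpha> * ?W (\<chi>, \<alpha>))"
      by (rule sum.mono_neutral_right[OF finite_bits])
        (auto simp: c'_def block_mat_offblock intro!: sum.neutral)
    finally show ?thesis by (simp add: tensor_vec_frame_basis)
  qed (simp add: mat_apply_def tensor_vec_def)
  then show ?thesis unfolding parity_span_def by blast
qed

lemma xparam_in_x_states: "xparam n y \<in> x_states n"
  unfolding x_states_def trace_one_space_def
  using xparam_in_aspace bmat_trace_xparam[unfolded bmat_trace_def] is_basis_family_frame_basis
    xparam_preserves_parity_span by blast

definition parity_preserving :: "nat \<Rightarrow> (nat \<Rightarrow> bool \<Rightarrow> bool \<Rightarrow> complex) \<Rightarrow> bmat \<Rightarrow> bool" where
  "parity_preserving n b \<rho> \<longleftrightarrow> (\<forall>p. \<forall>v\<in>parity_span n b p. mat_apply n \<rho> v \<in> parity_span n b p)"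

lemma x_states_iff:
  "\<rho> \<in> x_states n \<longleftrightarrow> \<rho> \<in> trace_one_space n \<and> (\<exists>b. is_basis_family n b \<and> parity_preserving n b \<rho>)"
  unfolding x_states_def parity_preserving_def by blast

definition flip :: "(nat \<Rightarrow> bool) \<Rightarrow> (nat \<Rightarrow> bool) \<Rightarrow> (nat \<Rightarrow> bool)" where
  "flip \<sigma> \<psi> = (\<lambda>i. \<psi> i \<noteq> \<sigma> i)"

lemma flip_flip: "flip \<sigma> (flip \<sigma> \<psi>) = \<psi>"
  unfolding flip_def by auto

lemma flip_in_bits: "\<sigma> \<in> bits n \<Longrightarrow> \<psi> \<in> bits n \<Longrightarrow> flip \<sigma> \<psi> \<in> bits n"
  unfolding flip_def bits_def by auto

lemma even_card_symdiff:
  assumes "finite A" "finite B"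
  shows "even (card {i. (i \<in> A) \<noteq> (i \<in> B)}) \<longleftrightarrow> (even (card A) \<longleftrightarrow> even (card B))"
proof -
  have "{i. (i \<in> A) \<noteq> (i \<in> B)} = (A - B) \<union> (B - A)" by auto
  then have "card {i. (i \<in> A) \<noteq> (i \<in> B)} = card (A - B) + card (B - A)"
    using assms by (simp add: card_Un_disjoint Diff_Int_distrib2 Int_Diff)
  moreover have "card A = card (A \<inter> B) + card (A - B)" "card B = card (A \<inter> B) + card (B - A)"
    using card_Int_Diff[OF assms(1), of B] card_Int_Diff[OF assms(2), of A] by (simp_all add: Int_commute)
  ultimately show ?thesis by presburger
qed

lemma parity_flip: "parity n (flip \<sigma> \<psi>) = (parity n \<psi> = parity n \<sigma>)"
proof -
  have eq: "{i. i < n \<and> flip \<sigma> \<psi> i} = {i. (i \<in> {i. i < n \<and> \<psi> i}) \<noteq> (i \<in> {i. i < n \<and> \<sigma> i})}"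
    unfolding flip_def by auto
  show ?thesis unfolding parity_def eq by (rule even_card_symdiff) auto
qed

lemma bij_betw_flip:
  assumes "\<sigma> \<in> bits n"
  shows "bij_betw (flip \<sigma>) {\<psi> \<in> bits n. parity n \<psi> = p} {\<gamma> \<in> bits n. parity n \<gamma> = (p = parity n \<sigma>)}"
  by (rule bij_betwI[where g = "flip \<sigma>"]) (use assms in \<open>auto simp: flip_in_bits parity_flip flip_flip\<close>)

definition swap_basis :: "(nat \<Rightarrow> bool) \<Rightarrow> (nat \<Rightarrow> bool \<Rightarrow> bool \<Rightarrow> complex)
    \<Rightarrow> nat \<Rightarrow> bool \<Rightarrow> bool \<Rightarrow> complex" where
  "swap_basis \<sigma> b = (\<lambda>i a c. b i (a \<noteq> \<sigma> i) c)"

lemma tensor_vec_swap_basis: "tensor_vec n (swap_basis \<sigma> b) \<psi> = tensor_vec n b (flip \<sigma> \<psi>)"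
  unfolding tensor_vec_def swap_basis_def flip_def by simp

lemma parity_span_swap_basis:
  assumes "\<sigma> \<in> bits n"
  shows "parity_span n (swap_basis \<sigma> b) p = parity_span n b (p = parity n \<sigma>)"
proof -
  let ?B1 = "{\<psi> \<in> bits n. parity n \<psi> = p}" and ?B2 = "{\<gamma> \<in> bits n. parity n \<gamma> = (p = parity n \<sigma>)}"
  have reindex: "(\<lambda>\<chi>. \<Sum>\<psi>\<in>?B1. c \<psi> * tensor_vec n b (flip \<sigma> \<psi>) \<chi>)
      = (\<lambda>\<chi>. \<Sum>\<gamma>\<in>?B2. c (flip \<sigma> \<gamma>) * tensor_vec n b \<gamma> \<chi>)" for c
  proof
    fix \<chi>
    show "(\<Sum>\<psi>\<in>?B1. c \<psi> * tensor_vec n b (flip \<sigma> \<psi>) \<chi>) = (\<Sum>\<gamma>\<in>?B2. c (flip \<sigma> \<gamma>) * tensor_vec n b \<gamma> \<chi>)"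
      using sum.reindex_bij_betw[OF bij_betw_flip[OF assms], of "\<lambda>\<gamma>. c (flip \<sigma> \<gamma>) * tensor_vec n b \<gamma> \<chi>"]
      by (simp add: flip_flip)
  qed
  show ?thesis
  proof (intro equalityI subsetI)
    fix v assume "v \<in> parity_span n (swap_basis \<sigma> b) p"
    then obtain c where "v = (\<lambda>\<chi>. \<Sum>\<gamma>\<in>?B2. c (flip \<sigma> \<gamma>) * tensor_vec n b \<gamma> \<chi>)"
      unfolding parity_span_def tensor_vec_swap_basis reindex by blast
    then show "v \<in> parity_span n b (p = parity n \<sigma>)"
      unfolding parity_span_def mem_Collect_eq by (rule exI[of _ "\<lambda>\<gamma>. c (flip \<sigma> \<gamma>)"])
  next
    fix v assume "v \<in> parity_span n b (p = parity n \<sigma>)"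
    then obtain c where "v = (\<lambda>\<chi>. \<Sum>\<gamma>\<in>?B2. c \<gamma> * tensor_vec n b \<gamma> \<chi>)"
      unfolding parity_span_def by blast
    then have "v = (\<lambda>\<chi>. \<Sum>\<psi>\<in>?B1. c (flip \<sigma> \<psi>) * tensor_vec n (swap_basis \<sigma> b) \<psi> \<chi>)"
      unfolding tensor_vec_swap_basis reindex flip_flip by simp
    then show "v \<in> parity_span n (swap_basis \<sigma> b) p"
      unfolding parity_span_def mem_Collect_eq by (rule exI[of _ "\<lambda>\<psi>. c (flip \<sigma> \<psi>)"])
  qed
qed

text \<open>Exchanging e_0 and e_1 at some qubits only exchanges the two parity spans; afterwards
  each basis matrix can be factored as in mat2_frame2_decomposition.\<close>

lemma parity_preserving_normalized_basis:
  assumes b: "is_basis_family n b" and pres: "parity_preserving n b \<rho>"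
  obtains b' where "is_basis_family n b'" "\<And>i. i < n \<Longrightarrow> b' i False False \<noteq> 0"
    "parity_preserving n b' \<rho>"
proof
  define \<sigma> where "\<sigma> = (\<lambda>i. i < n \<and> b i False False = 0)"
  have \<sigma>: "\<sigma> \<in> bits n" unfolding \<sigma>_def bits_def by auto
  have det: "b i False False * b i True True - b i False True * b i True False \<noteq> 0" if "i < n" for i
    using b that unfolding is_basis_family_def by blast
  show "is_basis_family n (swap_basis \<sigma> b)"
    unfolding is_basis_family_def swap_basis_def
  proof (intro allI impI)
    fix i assume "i < n"
    then show "b i (False \<noteq> \<sigma> i) False * b i (True \<noteq> \<sigma> i) True
        - b i (False \<noteq> \<sigma> i) True * b i (True \<noteq> \<sigma> i) False \<noteq> 0"
      using det[of i] by (cases "\<sigma> i") (auto simp: algebra_simps)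
  qed
  show "swap_basis \<sigma> b i False False \<noteq> 0" if "i < n" for i
  proof (cases "b i False False = 0")
    case True
    then show ?thesis using det[OF that] that by (simp add: swap_basis_def \<sigma>_def)
  qed (use that in \<open>simp add: swap_basis_def \<sigma>_def\<close>)
  show "parity_preserving n (swap_basis \<sigma> b) \<rho>"
    using pres unfolding parity_preserving_def parity_span_swap_basis[OF \<sigma>] by blast
qed

lemma mat2_frame2_decomposition:
  fixes b :: mat2
  assumes "b False False \<noteq> 0" and det: "b False False * b True True - b False True * b True False \<noteq> 0"
  defines "t \<equiv> b False True / b False False"
  defines "d \<equiv> b True True - t * b True False"
  shows "d \<noteq> 0" and "b a c = frame2 (b True False / d) t c a * (if a then d else b False False)"
proof -
  have "d = (b False False * b True True - b False True * b True False) / b False False"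
    using assms(1) by (simp add: d_def t_def field_simps)
  then show "d \<noteq> 0" using assms(1) det by simp
  then show "b a c = frame2 (b True False / d) t c a * (if a then d else b False False)"
    using assms(1) by (cases a; cases c) (simp_all add: frame2_def d_def t_def field_simps)
qed

lemma tensor_vec_eq_frame_scaled:
  assumes b: "is_basis_family n b" "\<And>i. i < n \<Longrightarrow> b i False False \<noteq> 0"
  obtains y \<delta> where "y \<in> aspace (params n)" "\<And>\<psi>. \<delta> \<psi> \<noteq> 0"
    "\<And>\<psi> \<chi>. \<psi> \<in> bits n \<Longrightarrow> tensor_vec n b \<psi> \<chi> = frame n y (\<chi>, \<psi>) * \<delta> \<psi>"
proof
  define t where "t i = b i False True / b i False False" for i
  define d where "d i = b i True True - t i * b i True False" for i
  define y :: "param \<Rightarrow> complex" where "y q = (case q of Inl _ \<Rightarrow> 0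
      | Inr (i, a) \<Rightarrow> if i < n then (if a then t i else b i True False / d i) else 0)" for q
  define \<delta> where "\<delta> \<psi> = (\<Prod>i<n. if \<psi> i then d i else b i False False)" for \<psi>
  have det: "b i False False * b i True True - b i False True * b i True False \<noteq> 0" if "i < n" for i
    using b(1) that unfolding is_basis_family_def by blast
  have d: "d i \<noteq> 0" if "i < n" for i
    using mat2_frame2_decomposition(1)[OF b(2)[OF that] det[OF that]] by (simp add: d_def t_def)
  have factor: "b i a c = frame2 (y (Inr (i, False))) (y (Inr (i, True))) c a
      * (if a then d i else b i False False)" if "i < n" for i a c
  proof -
    have "y (Inr (i, False)) = b i True False / d i" "y (Inr (i, True)) = t i"
      using that by (simp_all add: y_def)
    then show ?thesis
      using mat2_frame2_decomposition(2)[OF b(2)[OF that] det[OF that], of a c]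
      by (simp add: d_def t_def)
  qed
  show "y \<in> aspace (params n)"
    unfolding aspace_def params_def y_def by (auto split: sum.split)
  show "\<delta> \<psi> \<noteq> 0" for \<psi>
    unfolding \<delta>_def using b(2) d by simp
  show "tensor_vec n b \<psi> \<chi> = frame n y (\<chi>, \<psi>) * \<delta> \<psi>" if "\<psi> \<in> bits n" for \<psi> \<chi>
  proof (cases "\<chi> \<in> bits n")
    case True
    then have "tensor_vec n b \<psi> \<chi> = (\<Prod>i<n. b i (\<psi> i) (\<chi> i))" by (simp add: tensor_vec_def)
    also have "\<dots> = (\<Prod>i<n. frame2 (y (Inr (i, False))) (y (Inr (i, True))) (\<chi> i) (\<psi> i)
        * (if \<psi> i then d i else b i False False))"
      by (rule prod.cong[OF refl factor]) simp
    finally show ?thesis using True that by (simp add: frame_def kron_apply \<delta>_def prod.distrib)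
  qed (simp add: tensor_vec_def frame_def kron_def)
qed

lemma tensor_vec_in_parity_span:
  assumes "\<psi> \<in> bits n"
  shows "tensor_vec n b \<psi> \<in> parity_span n b (parity n \<psi>)"
proof -
  let ?B = "{\<gamma> \<in> bits n. parity n \<gamma> = parity n \<psi>}"
  have "(\<Sum>\<gamma>\<in>?B. (if \<gamma> = \<psi> then 1 else 0) * tensor_vec n b \<gamma> \<chi>)
      = (\<Sum>\<gamma>\<in>?B. if \<gamma> = \<psi> then tensor_vec n b \<psi> \<chi> else 0)" for \<chi>
    by (intro sum.cong) auto
  then have "tensor_vec n b \<psi> = (\<lambda>\<chi>. \<Sum>\<gamma>\<in>?B. (if \<gamma> = \<psi> then 1 else 0) * tensor_vec n b \<gamma> \<chi>)"
    using assms by (simp add: finite_bits)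
  then show ?thesis
    unfolding parity_span_def mem_Collect_eq by (rule exI[of _ "\<lambda>\<gamma>. if \<gamma> = \<psi> then 1 else 0"])
qed

lemma frame_conj_block_diagonal:
  assumes pres: "parity_preserving n b \<rho>"
    and tv: "\<And>\<psi> \<chi>. \<psi> \<in> bits n \<Longrightarrow> tensor_vec n b \<psi> \<chi> = frame n y (\<chi>, \<psi>) * \<delta> \<psi>"
    and \<delta>: "\<And>\<psi>. \<delta> \<psi> \<noteq> 0"
    and \<alpha>: "\<alpha> \<in> bits n" and \<beta>: "\<beta> \<in> bits n" and "parity n \<alpha> \<noteq> parity n \<beta>"
  shows "bmat_mult n (frame_inv n y) (bmat_mult n \<rho> (frame n y)) (\<alpha>, \<beta>) = 0"
proof -
  let ?B = "{\<gamma> \<in> bits n. parity n \<gamma> = parity n \<beta>}"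
  let ?W = "frame n y" and ?W' = "frame_inv n y"
  obtain e where e: "mat_apply n \<rho> (tensor_vec n b \<beta>) = (\<lambda>\<chi>. \<Sum>\<gamma>\<in>?B. e \<gamma> * tensor_vec n b \<gamma> \<chi>)"
    using pres tensor_vec_in_parity_span[OF \<beta>] unfolding parity_preserving_def parity_span_def by blast
  define f where "f \<gamma> = e \<gamma> * \<delta> \<gamma> / \<delta> \<beta>" for \<gamma>
  have \<rho>W: "bmat_mult n \<rho> ?W (\<chi>, \<beta>) = (\<Sum>\<gamma>\<in>?B. f \<gamma> * ?W (\<chi>, \<gamma>))" if \<chi>: "\<chi> \<in> bits n" for \<chi>
  proof -
    have "bmat_mult n \<rho> ?W (\<chi>, \<beta>) = mat_apply n \<rho> (tensor_vec n b \<beta>) \<chi> / \<delta> \<beta>"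
      using \<chi> \<beta> \<delta> by (simp add: bmat_mult_apply tv mat_apply_def sum_divide_distrib)
    also have "\<dots> = (\<Sum>\<gamma>\<in>?B. f \<gamma> * ?W (\<chi>, \<gamma>))"
      unfolding e sum_divide_distrib by (intro sum.cong refl) (simp add: tv f_def)
    finally show ?thesis .
  qed
  have "bmat_mult n ?W' (bmat_mult n \<rho> ?W) (\<alpha>, \<beta>) = (\<Sum>\<chi>\<in>bits n. ?W' (\<alpha>, \<chi>) * (\<Sum>\<gamma>\<in>?B. f \<gamma> * ?W (\<chi>, \<gamma>)))"
    unfolding bmat_mult_apply[OF \<alpha> \<beta>] by (intro sum.cong refl) (simp add: \<rho>W)
  also have "\<dots> = (\<Sum>\<gamma>\<in>?B. f \<gamma> * (\<Sum>\<chi>\<in>bits n. ?W' (\<alpha>, \<chi>) * ?W (\<chi>, \<gamma>)))"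
    by (simp add: sum_distrib_left sum.swap[of _ "bits n"] algebra_simps)
  also have "\<dots> = (\<Sum>\<gamma>\<in>?B. f \<gamma> * bmat_one n (\<alpha>, \<gamma>))"
    using \<alpha> by (intro sum.cong refl) (simp add: frame_inv_mult_frame flip: bmat_mult_apply)
  also have "\<dots> = 0"
    using \<open>parity n \<alpha> \<noteq> parity n \<beta>\<close> by (intro sum.neutral) (auto simp: bmat_one_def)
  finally show ?thesis .
qed

lemma block_mat_eqI:
  assumes M: "bmat_supported n M" "bmat_trace n M = 1"
    and block: "\<And>\<alpha> \<beta>. \<alpha> \<in> bits n \<Longrightarrow> \<beta> \<in> bits n \<Longrightarrow> parity n \<alpha> \<noteq> parity n \<beta> \<Longrightarrow> M (\<alpha>, \<beta>) = 0"
    and y: "\<And>v. v \<in> block_coords n \<Longrightarrow> y (Inl v) = M v"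
  shows "block_mat n y = M"
proof (intro ext, clarify)
  fix \<chi> \<psi>
  have "M (zero_bits, zero_bits) = 1 - (\<Sum>\<chi>'\<in>bits n - {zero_bits}. y (Inl (\<chi>', \<chi>')))"
  proof -
    have "(\<Sum>\<chi>'\<in>bits n - {zero_bits}. y (Inl (\<chi>', \<chi>'))) = (\<Sum>\<chi>'\<in>bits n - {zero_bits}. M (\<chi>', \<chi>'))"
      by (intro sum.cong refl) (auto simp: y block_coords_def)
    moreover have "bmat_trace n M = M (zero_bits, zero_bits) + (\<Sum>\<chi>'\<in>bits n - {zero_bits}. M (\<chi>', \<chi>'))"
      unfolding bmat_trace_def by (rule sum.remove[OF finite_bits zero_bits_in_bits])
    ultimately show ?thesis using M(2) by (simp add: eq_diff_eq)
  qed
  then show "block_mat n y (\<chi>, \<psi>) = M (\<chi>, \<psi>)"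
    using M(1) block y unfolding bmat_supported_def block_mat_def block_coords_def by auto
qed

lemma x_states_subset_xparam_image: "x_states n \<subseteq> xparam n ` aspace (params n)"
proof
  fix \<rho> assume \<rho>: "\<rho> \<in> x_states n"
  then have \<rho>_supp: "bmat_supported n \<rho>" and tr: "bmat_trace n \<rho> = 1"
    by (auto simp: x_states_def trace_one_space_def bmat_trace_def bmat_supported_aspace)
  obtain b where b: "is_basis_family n b" "\<And>i. i < n \<Longrightarrow> b i False False \<noteq> 0"
    and pres: "parity_preserving n b \<rho>"
    using \<rho> parity_preserving_normalized_basis unfolding x_states_iff by metis
  obtain y0 \<delta> where y0: "y0 \<in> aspace (params n)" and \<delta>: "\<And>\<psi>. \<delta> \<psi> \<noteq> 0"
    and tv: "\<And>\<psi> \<chi>. \<psi> \<in> bits n \<Longrightarrow> tensor_vec n b \<psi> \<chi> = frame n y0 (\<chi>, \<psi>) * \<delta> \<psi>"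
    using tensor_vec_eq_frame_scaled[OF b] by blast
  define M where "M = bmat_mult n (frame_inv n y0) (bmat_mult n \<rho> (frame n y0))"
  define y :: "param \<Rightarrow> complex"
    where "y q = (case q of Inl v \<Rightarrow> if v \<in> block_coords n then M v else 0 | Inr r \<Rightarrow> y0 (Inr r))" for q
  have frame_y: "frame n y = frame n y0" "frame_inv n y = frame_inv n y0"
    unfolding frame_def frame_inv_def y_def by simp_all
  have "bmat_trace n M = 1"
    unfolding M_def bmat_trace_mult_commute[of n "frame_inv n y0"]
    by (simp add: bmat_mult_assoc frame_mult_frame_inv bmat_mult_one_right \<rho>_supp tr)
  then have "block_mat n y = M"
    using frame_conj_block_diagonal[OF pres tv \<delta>]
    by (intro block_mat_eqI) (auto simp: M_def y_def bmat_supported_mult)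
  then have "xparam n y = bmat_mult n (bmat_mult n (bmat_mult n (frame n y0) (frame_inv n y0))
      (bmat_mult n \<rho> (frame n y0))) (frame_inv n y0)"
    unfolding xparam_def frame_y M_def by (simp add: bmat_mult_assoc)
  also have "\<dots> = \<rho>"
    by (simp add: frame_mult_frame_inv bmat_mult_one_left bmat_supported_mult bmat_mult_assoc
        bmat_mult_one_right \<rho>_supp)
  finally have "xparam n y = \<rho>" .
  moreover have "y \<in> aspace (params n)"
    using y0 unfolding aspace_def params_def y_def by (auto split: sum.split)
  ultimately show "\<rho> \<in> xparam n ` aspace (params n)" by blast
qed

section \<open>Counting the parameters\<close>

lemma not_parity_single_site: "i0 < n \<Longrightarrow> \<not> parity n (\<lambda>i. i = i0)"
proof -
  assume "i0 < n"
  then have "{i. i < n \<and> i = i0} = {i0}" by auto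
  then show ?thesis by (simp add: parity_def)
qed

lemma card_parity_class:
  assumes "1 \<le> n"
  shows "card {\<chi> \<in> bits n. parity n \<chi> = p} = 2 ^ (n - 1)"
proof -
  let ?A = "\<lambda>q. {\<chi> \<in> bits n. parity n \<chi> = q}"
  have \<sigma>: "(\<lambda>i. i = 0) \<in> bits n" "\<not> parity n (\<lambda>i. i = 0)"
    using assms not_parity_single_site[of 0 n] by (auto simp: bits_def)
  have "card (?A p) = card (?A (\<not> p))"
    using bij_betw_same_card[OF bij_betw_flip[OF \<sigma>(1)]] \<sigma>(2) by simp
  moreover have "card (?A p \<union> ?A (\<not> p)) = card (?A p) + card (?A (\<not> p))"
    by (rule card_Un_disjoint) (auto simp: finite_bits)
  moreover have "?A p \<union> ?A (\<not> p) = bits n" by auto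
  moreover have "(2::nat) ^ n = 2 * 2 ^ (n - 1)"
    using assms by (simp flip: power_Suc)
  ultimately show ?thesis by (simp add: card_bits)
qed

lemma finite_block_coords: "finite (block_coords n)"
  by (rule finite_subset[of _ "bits n \<times> bits n"]) (auto simp: block_coords_def finite_bits)

lemma finite_params: "finite (params n)"
  unfolding params_def using finite_block_coords by simp

lemma card_block_coords:
  assumes "1 \<le> n"
  shows "card (block_coords n) = 2 ^ (2 * n - 1) - 1"
proof -
  let ?A = "\<lambda>q. {\<chi> \<in> bits n. parity n \<chi> = q}"
  let ?S = "?A True \<times> ?A True \<union> ?A False \<times> ?A False"
  have finite: "finite (?A q \<times> ?A q')" for q q' using finite_bits[of n] by simp
  have "card ?S = card (?A True \<times> ?A True) + card (?A False \<times> ?A False)"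
    using finite[of True True] finite[of False False] by (intro card_Un_disjoint) auto
  also have "\<dots> = 2 ^ (n - 1) * 2 ^ (n - 1) + 2 ^ (n - 1) * 2 ^ (n - 1)"
    using card_parity_class[OF assms, of True] card_parity_class[OF assms, of False]
    by (simp add: card_cartesian_product)
  also have "\<dots> = 2 ^ (2 * n - 1)"
  proof -
    obtain m where "n = Suc m" using assms by (cases n) auto
    then show ?thesis by (simp add: mult_2 power_add)
  qed
  finally have "card ?S = 2 ^ (2 * n - 1)" .
  moreover have "block_coords n = ?S - {(zero_bits, zero_bits)}" "(zero_bits, zero_bits) \<in> ?S"
    using zero_bits_in_bits[of n] by (auto simp: block_coords_def)
  ultimately show ?thesis using finite by (simp add: card_Diff_singleton)
qed

lemma card_params: "card (params n) = card (block_coords n) + 2 * n"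
  unfolding params_def using finite_block_coords
  by (subst card_Un_disjoint) (auto simp: card_image card_cartesian_product)

section \<open>A chain of irreducible subvarieties of full length\<close>

definition single_site :: "nat \<Rightarrow> mat2 \<Rightarrow> nat \<Rightarrow> mat2" where
  "single_site i0 G = (\<lambda>i. if i = i0 then G else mat2_one)"

definition site_functional :: "nat \<Rightarrow> nat \<Rightarrow> mat2 \<Rightarrow> bmat \<Rightarrow> complex" where
  "site_functional n i0 G \<rho> = bmat_trace n (bmat_mult n \<rho> (kron n (single_site i0 G)))"

definition site_conj :: "(param \<Rightarrow> complex) \<Rightarrow> nat \<Rightarrow> mat2 \<Rightarrow> nat \<Rightarrow> mat2" where
  "site_conj y i0 G i = mat2_mult
     (mat2_mult (frame2_inv (y (Inr (i, False))) (y (Inr (i, True)))) (single_site i0 G i))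
     (frame2 (y (Inr (i, False))) (y (Inr (i, True))))"

definition mat2_E10 :: mat2 where
  "mat2_E10 = (\<lambda>a c. if a \<and> \<not> c then 1 else 0)"

definition mat2_E01 :: mat2 where
  "mat2_E01 = (\<lambda>a c. if \<not> a \<and> c then 1 else 0)"

lemma mat2_mult_one_right: "mat2_mult A mat2_one = A"
  and mat2_mult_one_left: "mat2_mult mat2_one A = A"
  by (auto intro!: ext simp: mat2_mult_def mat2_one_def)

lemma site_conj_other: "i \<noteq> i0 \<Longrightarrow> site_conj y i0 G i = mat2_one"
  by (simp add: site_conj_def single_site_def mat2_mult_one_right mat2_mult_frame2_inv_frame2)

lemma polyfun_site_functional: "polyfun (bits n \<times> bits n) (site_functional n i0 G)"
  unfolding site_functional_def bmat_trace_def bmat_mult_def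
  by (auto intro!: polyfun_sum polyfun.pmult polyfun.pvar polyfun.pconst)

text \<open>By cyclicity of the trace, evaluating the functional at W M W^-1 conjugates the
  single-site matrix by W instead.\<close>

lemma site_functional_xparam:
  "site_functional n i0 G (xparam n y)
     = (\<Sum>\<alpha>\<in>bits n. \<Sum>\<beta>\<in>bits n. block_mat n y (\<alpha>, \<beta>) * kron n (site_conj y i0 G) (\<beta>, \<alpha>))"
proof -
  let ?W = "frame n y" and ?W' = "frame_inv n y" and ?M = "block_mat n y"
  let ?T = "kron n (single_site i0 G)"
  have "site_functional n i0 G (xparam n y)
      = bmat_trace n (bmat_mult n ?W (bmat_mult n ?M (bmat_mult n ?W' ?T)))"
    unfolding site_functional_def xparam_def by (simp add: bmat_mult_assoc)
  also have "\<dots> = bmat_trace n (bmat_mult n (bmat_mult n ?M (bmat_mult n ?W' ?T)) ?W)"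
    by (rule bmat_trace_mult_commute)
  also have "\<dots> = bmat_trace n (bmat_mult n ?M (bmat_mult n (bmat_mult n ?W' ?T) ?W))"
    by (simp add: bmat_mult_assoc)
  also have "bmat_mult n (bmat_mult n ?W' ?T) ?W = kron n (site_conj y i0 G)"
    unfolding frame_def frame_inv_def kron_mult site_conj_def ..
  finally show ?thesis unfolding bmat_trace_def by (simp add: bmat_mult_apply)
qed

lemma parity_differ_single_site:
  assumes "\<alpha> \<in> bits n" "\<beta> \<in> bits n" "i0 < n"
    and "\<And>i. i < n \<Longrightarrow> i \<noteq> i0 \<Longrightarrow> \<alpha> i = \<beta> i" and "\<alpha> i0 \<noteq> \<beta> i0"
  shows "parity n \<alpha> \<noteq> parity n \<beta>"
proof -
  have "\<beta> = flip (\<lambda>i. i = i0) \<alpha>"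
    using assms by (intro bits_eqI flip_in_bits) (auto simp: bits_def flip_def)
  then show ?thesis using not_parity_single_site[OF assms(3)] by (simp add: parity_flip)
qed

text \<open>Since M is block diagonal and two bit strings differing only at i0 have different
  parity, only the diagonal of the i0-th factor contributes.\<close>

lemma site_functional_xparam_eq_0:
  assumes "i0 < n" and diag: "\<And>a. site_conj y i0 G i0 a a = 0"
  shows "site_functional n i0 G (xparam n y) = 0"
  unfolding site_functional_xparam
proof (intro sum.neutral ballI)
  fix \<alpha> \<beta> assume \<alpha>: "\<alpha> \<in> bits n" and \<beta>: "\<beta> \<in> bits n"
  have "(\<Prod>i<n. site_conj y i0 G i (\<beta> i) (\<alpha> i)) = 0" if same: "parity n \<alpha> = parity n \<beta>"
  proof (cases "\<alpha> i0 = \<beta> i0")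
    case True
    then show ?thesis using diag \<open>i0 < n\<close> by (intro prod_zero) (auto intro!: bexI[of _ i0])
  next
    case False
    then obtain i where "i < n" "i \<noteq> i0" "\<alpha> i \<noteq> \<beta> i"
      using parity_differ_single_site[OF \<alpha> \<beta> \<open>i0 < n\<close>] same by blast
    then show ?thesis
      by (intro prod_zero) (auto simp: site_conj_other mat2_one_def intro!: bexI[of _ i])
  qed
  then show "block_mat n y (\<alpha>, \<beta>) * kron n (site_conj y i0 G) (\<beta>, \<alpha>) = 0"
    using \<alpha> \<beta> by (cases "parity n \<alpha> = parity n \<beta>") (simp_all add: block_mat_offblock kron_apply)
qed

lemma site_functional_xparam_witness:
  assumes "i0 < n" and "\<And>v. y (Inl v) = 0"
  shows "site_functional n i0 G (xparam n y) = site_conj y i0 G i0 False False"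
proof -
  have M: "block_mat n y (\<alpha>, \<beta>) = (if \<alpha> = zero_bits \<and> \<beta> = zero_bits then 1 else 0)" for \<alpha> \<beta>
    using assms(2) zero_bits_in_bits[of n] by (auto simp: block_mat_def)
  have delta: "(\<Sum>\<alpha>\<in>bits n. \<Sum>\<beta>\<in>bits n. if \<alpha> = zero_bits \<and> \<beta> = zero_bits then K else 0) = K" for K
  proof -
    have "(\<Sum>\<beta>\<in>bits n. if \<alpha> = zero_bits \<and> \<beta> = zero_bits then K else 0)
        = (if \<alpha> = zero_bits then K else 0)" for \<alpha>
      by (cases "\<alpha> = zero_bits") (simp_all add: finite_bits zero_bits_in_bits)
    then show ?thesis by (simp add: finite_bits zero_bits_in_bits)
  qed
  have "site_functional n i0 G (xparam n y) = (\<Sum>\<alpha>\<in>bits n. \<Sum>\<beta>\<in>bits n.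
      if \<alpha> = zero_bits \<and> \<beta> = zero_bits then kron n (site_conj y i0 G) (zero_bits, zero_bits) else 0)"
    unfolding site_functional_xparam M by (intro sum.cong refl) auto
  also have "\<dots> = kron n (site_conj y i0 G) (zero_bits, zero_bits)" by (rule delta)
  also have "\<dots> = (\<Prod>i<n. site_conj y i0 G i False False)"
    using zero_bits_in_bits[of n] by (simp add: kron_apply zero_bits_def)
  also have "\<dots> = (\<Prod>i<n. if i = i0 then site_conj y i0 G i0 False False else 1)"
    by (intro prod.cong refl) (simp add: site_conj_other mat2_one_def)
  finally show ?thesis using assms(1) by simp
qed

lemma site_conj_E10_diag:
  "y (Inr (i0, False)) = 0 \<Longrightarrow> y (Inr (i0, True)) = 0 \<Longrightarrow> site_conj y i0 mat2_E10 i0 a a = 0"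
  by (simp add: site_conj_def single_site_def frame2_0 frame2_inv_0 mat2_mult_one_left
      mat2_mult_one_right mat2_E10_def)

lemma site_conj_E01_diag: "y (Inr (i0, True)) = 0 \<Longrightarrow> site_conj y i0 mat2_E01 i0 a a = 0"
  by (cases a)
    (simp_all add: site_conj_def single_site_def mat2_mult_def frame2_def frame2_inv_def mat2_E01_def)

lemma site_conj_E10_witness:
  "y (Inr (i0, False)) = 1 \<Longrightarrow> y (Inr (i0, True)) = 0 \<Longrightarrow> site_conj y i0 mat2_E10 i0 False False = -1"
  by (simp add: site_conj_def single_site_def mat2_mult_def frame2_def frame2_inv_def mat2_E10_def)

lemma site_conj_E01_witness:
  "y (Inr (i0, False)) = 0 \<Longrightarrow> y (Inr (i0, True)) = 1 \<Longrightarrow> site_conj y i0 mat2_E01 i0 False False = 1"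
  by (simp add: site_conj_def single_site_def mat2_mult_def frame2_def frame2_inv_def mat2_E01_def)

lemma xparam_eq_block_mat:
  assumes "\<And>r. y (Inr r) = 0"
  shows "xparam n y = block_mat n y"
proof -
  have "frame n y = bmat_one n" "frame_inv n y = bmat_one n"
    unfolding frame_def frame_inv_def using assms by (simp_all add: frame2_0 frame2_inv_0 kron_one)
  then show ?thesis
    by (simp add: xparam_def bmat_mult_one_left bmat_mult_one_right bmat_supported_block_mat
        bmat_supported_mult)
qed

lemma aspace_mono: "A \<subseteq> B \<Longrightarrow> aspace A \<subseteq> aspace B"
  unfolding aspace_def by auto

lemma zariski_closure_image_psubset:
  assumes img: "\<phi> ` aspace L' \<subseteq> aspace V" and "L \<subseteq> L'"
    and g: "polyfun V g" "\<And>y. y \<in> aspace L \<Longrightarrow> g (\<phi> y) = 0" and y1: "y1 \<in> aspace L'" "g (\<phi> y1) \<noteq> 0"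
  shows "zariski_closure V (\<phi> ` aspace L) \<subset> zariski_closure V (\<phi> ` aspace L')"
proof -
  have sub: "\<phi> ` aspace L \<subseteq> \<phi> ` aspace L'" using aspace_mono[OF \<open>L \<subseteq> L'\<close>] by blast
  have "\<phi> y1 \<in> zariski_closure V (\<phi> ` aspace L')"
    using zariski_closure_superset[OF img] y1(1) by blast
  moreover have "\<phi> y1 \<notin> zariski_closure V (\<phi> ` aspace L)"
    using polyfun_vanishes_on_closure[OF g(1), of "\<phi> ` aspace L"] sub img g(2) y1(2) by blast
  ultimately show ?thesis using zariski_closure_mono[OF sub] by blast
qed

lemma xparam_image_in_aspace: "xparam n ` aspace L \<subseteq> aspace (bits n \<times> bits n)"
  using xparam_in_aspace by blast

lemma closure_xparam_psubset_Inl: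
  assumes "m \<in> block_coords n" "Inl m \<notin> L" and "\<And>r. Inr r \<notin> L"
  shows "zariski_closure (bits n \<times> bits n) (xparam n ` aspace L)
    \<subset> zariski_closure (bits n \<times> bits n) (xparam n ` aspace (insert (Inl m) L))"
proof (rule zariski_closure_image_psubset[OF xparam_image_in_aspace subset_insertI])
  have xparam_m: "xparam n y m = y (Inl m)" if "\<And>r. y (Inr r) = 0" for y
    using assms(1) xparam_eq_block_mat[of y n] that by (cases m) (auto simp: block_coords_def block_mat_def)
  have "m \<in> bits n \<times> bits n" using assms(1) by (auto simp: block_coords_def)
  then show "polyfun (bits n \<times> bits n) (\<lambda>\<rho>. \<rho> m)" by (rule polyfun.pvar)
  show "xparam n y m = 0" if "y \<in> aspace L" for y
    using that assms(2,3) xparam_m[of y] by (simp add: aspace_def)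
  let ?y1 = "\<lambda>q. if q = Inl m then 1 else 0"
  show "?y1 \<in> aspace (insert (Inl m) L)" by (simp add: aspace_def)
  show "xparam n ?y1 m \<noteq> 0" using xparam_m[of ?y1] by simp
qed

lemma closure_xparam_psubset_s:
  assumes "i0 < n" "Inr (i0, False) \<notin> L" "Inr (i0, True) \<notin> L"
  shows "zariski_closure (bits n \<times> bits n) (xparam n ` aspace L)
    \<subset> zariski_closure (bits n \<times> bits n) (xparam n ` aspace (insert (Inr (i0, False)) L))"
proof (rule zariski_closure_image_psubset[OF xparam_image_in_aspace subset_insertI polyfun_site_functional])
  show "site_functional n i0 mat2_E10 (xparam n y) = 0" if "y \<in> aspace L" for y
    using that assms by (intro site_functional_xparam_eq_0 site_conj_E10_diag) (auto simp: aspace_def)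
  let ?y1 = "\<lambda>q. if q = Inr (i0, False) then 1 else 0"
  show "?y1 \<in> aspace (insert (Inr (i0, False)) L)" by (simp add: aspace_def)
  have "site_functional n i0 mat2_E10 (xparam n ?y1) = -1"
    using assms(1) by (simp add: site_functional_xparam_witness site_conj_E10_witness)
  then show "site_functional n i0 mat2_E10 (xparam n ?y1) \<noteq> 0" by simp
qed

lemma closure_xparam_psubset_t:
  assumes "i0 < n" "Inr (i0, True) \<notin> L"
  shows "zariski_closure (bits n \<times> bits n) (xparam n ` aspace L)
    \<subset> zariski_closure (bits n \<times> bits n) (xparam n ` aspace (insert (Inr (i0, True)) L))"
proof (rule zariski_closure_image_psubset[OF xparam_image_in_aspace subset_insertI polyfun_site_functional])
  show "site_functional n i0 mat2_E01 (xparam n y) = 0" if "y \<in> aspace L" for y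
    using that assms by (intro site_functional_xparam_eq_0 site_conj_E01_diag) (auto simp: aspace_def)
  let ?y1 = "\<lambda>q. if q = Inr (i0, True) then 1 else 0"
  show "?y1 \<in> aspace (insert (Inr (i0, True)) L)" by (simp add: aspace_def)
  have "site_functional n i0 mat2_E01 (xparam n ?y1) = 1"
    using assms(1) by (simp add: site_functional_xparam_witness site_conj_E01_witness)
  then show "site_functional n i0 mat2_E01 (xparam n ?y1) \<noteq> 0" by simp
qed

text \<open>The entries of M come first, then s_i before t_i for each qubit i: the functional that
  separates the step adding s_i vanishes only while t_i is still zero.\<close>

definition param_enum :: "nat \<Rightarrow> (nat \<Rightarrow> (nat \<Rightarrow> bool) \<times> (nat \<Rightarrow> bool)) \<Rightarrow> nat \<Rightarrow> param" where
  "param_enum K h j = (if j < K then Inl (h j) else Inr ((j - K) div 2, odd (j - K)))"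

lemma inj_on_param_enum:
  assumes "inj_on h {..<K}"
  shows "inj_on (param_enum K h) {..<K + 2 * n}"
proof (rule inj_onI)
  fix j1 j2 assume "j1 \<in> {..<K + 2 * n}" "j2 \<in> {..<K + 2 * n}"
    and eq: "param_enum K h j1 = param_enum K h j2"
  show "j1 = j2"
  proof (cases "j1 < K")
    case True
    then have "j2 < K" using eq by (cases "j2 < K") (auto simp: param_enum_def)
    then show ?thesis using True eq assms by (auto simp: param_enum_def inj_on_def)
  next
    case False
    then have "\<not> j2 < K" using eq by (cases "j2 < K") (auto simp: param_enum_def)
    moreover have "(j1 - K) div 2 = (j2 - K) div 2" "odd (j1 - K) = odd (j2 - K)"
      using False calculation eq by (auto simp: param_enum_def)
    then have "j1 - K = j2 - K" using bit_eq_rec[of "j1 - K" "j2 - K"] by blast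
    ultimately show ?thesis using False by simp
  qed
qed

lemma closure_xparam_enum_psubset:
  assumes h: "bij_betw h {..<K} (block_coords n)" and j: "j < K + 2 * n"
  defines "en \<equiv> param_enum K h"
  shows "zariski_closure (bits n \<times> bits n) (xparam n ` aspace (en ` {..<j}))
    \<subset> zariski_closure (bits n \<times> bits n) (xparam n ` aspace (en ` {..<Suc j}))"
proof -
  have fresh: "en j' \<notin> en ` {..<j}" if "j \<le> j'" "j' < K + 2 * n" for j'
    using that inj_on_param_enum[OF bij_betw_imp_inj_on[OF h], of n]
    by (auto simp: en_def dest: inj_onD)
  have en_Suc: "en ` {..<Suc j} = insert (en j) (en ` {..<j})" by (simp add: lessThan_Suc)
  consider "j < K" | "K \<le> j" "even (j - K)" | "K \<le> j" "odd (j - K)" by linarith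
  then show ?thesis
  proof cases
    case 1
    then have en_j: "en j = Inl (h j)" by (simp add: en_def param_enum_def)
    have "Inr r \<notin> en ` {..<j}" for r using 1 by (auto simp: en_def param_enum_def)
    then show ?thesis
      unfolding en_Suc en_j
      by (rule closure_xparam_psubset_Inl[rotated 2])
        (use 1 bij_betwE[OF h] fresh[of j] j in \<open>auto simp: en_j\<close>)
  next
    case 2
    then have en_j: "en j = Inr ((j - K) div 2, False)" "en (Suc j) = Inr ((j - K) div 2, True)"
      by (simp_all add: en_def param_enum_def) presburger
    have "Suc j < K + 2 * n" using 2 j by presburger
    then have "Inr ((j - K) div 2, True) \<notin> en ` {..<j}" using fresh[of "Suc j"] by (simp add: en_j)
    then show ?thesis
      unfolding en_Suc en_j(1)
      by (intro closure_xparam_psubset_s) (use 2 j fresh[of j] in \<open>auto simp: en_j\<close>)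
  next
    case 3
    then have en_j: "en j = Inr ((j - K) div 2, True)" by (simp add: en_def param_enum_def)
    show ?thesis
      unfolding en_Suc en_j
      by (rule closure_xparam_psubset_t) (use 3 j fresh[of j] in \<open>auto simp: en_j\<close>)
  qed
qed

lemma xparam_chain:
  obtains Z where "\<forall>i\<le>card (params n). zariski_irreducible (bits n \<times> bits n) (Z i) \<and> Z i \<subseteq> x_variety n"
    and "\<forall>i<card (params n). Z i \<subset> Z (Suc i)"
proof -
  obtain h where h: "bij_betw h {..<card (block_coords n)} (block_coords n)"
    using ex_bij_betw_nat_finite[OF finite_block_coords] unfolding atLeast0LessThan by blast
  define Z where "Z j = zariski_closure (bits n \<times> bits n)
      (xparam n ` aspace (param_enum (card (block_coords n)) h ` {..<j}))" for j
  have irreducible: "zariski_irreducible (bits n \<times> bits n) (Z i)" for i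
    unfolding Z_def by (rule zariski_irreducible_closure_image[OF xparam_in_aspace polyfun_xparam])
  have subset: "Z i \<subseteq> x_variety n" for i
    unfolding Z_def x_variety_def by (rule zariski_closure_mono) (use xparam_in_x_states in blast)
  have strict: "Z i \<subset> Z (Suc i)" if "i < card (params n)" for i
    unfolding Z_def using closure_xparam_enum_psubset[OF h] that by (simp add: card_params)
  show thesis using irreducible subset strict by (intro that[of Z]) blast+
qed

theorem corollary4p17:
  fixes n :: nat
  assumes "n \<ge> 1"
  shows "zariski_dim (bits n \<times> bits n) (x_variety n) = enat (2 ^ (2 * n - 1) + 2 * n - 1)"
proof -
  have "zariski_dim (bits n \<times> bits n) (x_variety n) \<le> card (params n)"
    unfolding x_variety_def
    by (rule zariski_dim_closure_image_le[OF finite_params x_states_subset_xparam_image _ polyfun_xparam])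
      (auto simp: x_states_def trace_one_space_def)
  moreover obtain Z where
    "\<forall>i\<le>card (params n). zariski_irreducible (bits n \<times> bits n) (Z i) \<and> Z i \<subseteq> x_variety n"
    "\<forall>i<card (params n). Z i \<subset> Z (Suc i)"
    by (rule xparam_chain)
  then have "enat (card (params n)) \<le> zariski_dim (bits n \<times> bits n) (x_variety n)"
    by (rule enat_le_zariski_dim)
  moreover have "card (params n) = 2 ^ (2 * n - 1) + 2 * n - 1"
    using assms by (simp add: card_params card_block_coords)
  ultimately show ?thesis by simp
qed

end
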